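(* Let $n$ be a positive integer and $X\subseteq\mathbb{Z}_n$ a set of size $m>0$. There exists a partial coloring $\chi:X\to\{-1,0,1\}$ with $\chi(x)\in\{1,-1\}$ for at least $m/10$ elements $x\in X$ such that \[\max_{A\in\mathcal A_n}|\chi(A\cap X)|\le 200\, m^{1/2}\left(\log\frac{en}{m}\right)^{1/2}.\]
   Context: For a positive integer $n$, an arithmetic progression in $\mathbb{Z}_n$ is a set $\{a+kd: 0\le k<l\}$ with $a,d\in\mathbb{Z}_n$ and $l$ an integer with $0\le l\le n/\gcd(n,d)$ (here $\gcd(d,n)$ is computed for any integer representative of $d$, so $\gcd(0,n)=n$). $\mathcal A_n$ denotes the family of all arithmetic progressions in $\mathbb{Z}_n$. For a function $\chi$ defined on a set containing $B$, $\chi(B)=\sum_{x\in B}\chi(x)$. Logarithms are natural. *)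

theory Defs
  imports "HOL-Analysis.Analysis"
begin

text \<open>Z_n is represented by the residues {0..<n} (naturals), arithmetic taken mod n.
  An arithmetic progression {a + k d : 0 <= k < l} with a, d in Z_n and
  0 <= l <= n / gcd(n,d).\<close>

definition arith_prog :: "nat \<Rightarrow> nat \<Rightarrow> nat \<Rightarrow> nat \<Rightarrow> nat set" where
  "arith_prog n a d l = {(a + k * d) mod n | k. k < l}"

definition APs :: "nat \<Rightarrow> nat set set" where
  "APs n = {arith_prog n a d l | a d l. a < n \<and> d < n \<and> l * gcd n d \<le> n}"

end

theory Submission
  imports Defs "HOL-Probability.Hoeffding"
begin

(* The proof follows the entropy (partial colouring) method of Beck and Spencer.
  Fix a difference d. Walking twice around each coset r + <d> of Z_n, every progression with
  difference d meets X in a window of consecutive walk steps, hence its sum is a difference of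
  two prefix sums, and every prefix of the at most 2m visits of X splits into canonical dyadic
  blocks of ranks [q 2^(j+1), q 2^(j+1) + 2^j). There are O(n m / 2^j) blocks of size 2^j, and a
  block of size 2^j receives the threshold sqrt(2^j (log(n/m) + J - j)), with 2^J about 4m, so
  the entropy costs sum to at most m/10. Among all 2^m full colourings, many therefore round all
  block sums to the same grid cells; two of them differing in m/10 places give the partial
  colouring (c0 - c1)/2, and the thresholds sum geometrically to O(sqrt(m log(e n/m))). *)

lemma exp_plus_exp_minus_le:
  fixes a :: real
  shows "exp a + exp (-a) \<le> 2 * exp (a^2/2)"
proof -
  have *: "exp a + exp (-a) \<le> 2 * exp (a^2/2)" if "a \<ge> 0" for a :: real
  proof -
    have "-(2*a) * (1/2) + ln (1 + (1/2) * (exp (2*a) - 1)) \<le> (2*a)^2/8"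
      using Hoeffdings_lemma_aux[of "2*a" "1/2"] that by simp
    hence "ln ((1 + exp (2*a))/2) \<le> a + a^2/2"
      by (simp add: power2_eq_square field_simps)
    hence "(1 + exp (2*a))/2 \<le> exp (a + a^2/2)"
      by (smt (verit) exp_gt_zero exp_le_cancel_iff exp_ln)
    hence "exp (-a) * ((1 + exp (2*a))/2) \<le> exp (-a) * exp (a + a^2/2)"
      by (intro mult_left_mono) auto
    moreover have "exp (-a) * ((1 + exp (2*a))/2) = (exp a + exp (-a))/2"
      by (simp add: field_simps flip: exp_add)
    moreover have "exp (-a) * exp (a + a^2/2) = exp (a^2/2)"
      by (simp flip: exp_add)
    ultimately show ?thesis by simp
  qed
  show ?thesis
    using *[of a] *[of "-a"] by (cases "a \<ge> 0") auto
qed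

definition colorings :: "nat set \<Rightarrow> (nat \<Rightarrow> int) set" where
  "colorings X = PiE X (\<lambda>_. {-1,1})"

lemma card_colorings: "finite X \<Longrightarrow> card (colorings X) = 2 ^ card X"
  by (simp add: colorings_def card_PiE numeral_2_eq_2)

lemma finite_colorings: "finite X \<Longrightarrow> finite (colorings X)"
  by (simp add: colorings_def finite_PiE)

lemma sum_colorings_exp_le:
  fixes w :: "nat \<Rightarrow> real" and \<theta> :: real
  assumes X: "finite X"
  shows "(\<Sum>c\<in>colorings X. exp (\<theta> * (\<Sum>x\<in>X. w x * c x)))
          \<le> 2 ^ card X * exp (\<theta>^2 * (\<Sum>x\<in>X. (w x)^2) / 2)"
proof -
  have "(\<Sum>c\<in>colorings X. exp (\<theta> * (\<Sum>x\<in>X. w x * c x)))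
      = (\<Sum>c\<in>colorings X. \<Prod>x\<in>X. exp (\<theta> * w x * c x))"
    using X by (simp add: exp_sum sum_distrib_left mult.assoc)
  also have "\<dots> = (\<Prod>x\<in>X. \<Sum>s\<in>{-1,1::int}. exp (\<theta> * w x * s))"
    unfolding colorings_def using X by (subst prod_sum_PiE) auto
  also have "\<dots> = (\<Prod>x\<in>X. exp (\<theta> * w x) + exp (-(\<theta> * w x)))"
    by (intro prod.cong) auto
  also have "\<dots> \<le> (\<Prod>x\<in>X. 2 * exp ((\<theta> * w x)^2/2))"
    by (intro prod_mono) (auto intro: exp_plus_exp_minus_le add_nonneg_nonneg)
  also have "\<dots> = 2 ^ card X * exp (\<theta>^2 * (\<Sum>x\<in>X. (w x)^2) / 2)"
    using X by (simp add: prod.distrib exp_sum sum_distrib_left sum_divide_distrib power_mult_distrib)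
  finally show ?thesis .
qed

lemma sum_fibre_weights_le_1:
  fixes \<Omega> :: "'a set" and f :: "'a \<Rightarrow> 'i \<Rightarrow> int" and u :: "'i \<Rightarrow> int \<Rightarrow> real"
  assumes fin: "finite \<Omega>" and finI: "finite I" and finK: "\<And>i. i \<in> I \<Longrightarrow> finite (K i)"
    and fK: "\<And>c. c \<in> \<Omega> \<Longrightarrow> f c \<in> PiE I K"
    and upos: "\<And>i k. i \<in> I \<Longrightarrow> k \<in> K i \<Longrightarrow> u i k > 0"
    and usum: "\<And>i. i \<in> I \<Longrightarrow> (\<Sum>k\<in>K i. u i k) \<le> 1"
  shows "(\<Sum>c\<in>\<Omega>. (\<Prod>i\<in>I. u i (f c i)) / card {c'\<in>\<Omega>. f c' = f c}) \<le> 1"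
proof -
  define U where "U \<beta> = (\<Prod>i\<in>I. u i (\<beta> i))" for \<beta>
  have "(\<Sum>c\<in>\<Omega>. U (f c) / card {c'\<in>\<Omega>. f c' = f c})
      = (\<Sum>\<beta>\<in>f ` \<Omega>. \<Sum>c\<in>{c\<in>\<Omega>. f c = \<beta>}. U (f c) / card {c'\<in>\<Omega>. f c' = f c})"
    using fin by (rule sum.image_gen)
  also have "\<dots> = (\<Sum>\<beta>\<in>f ` \<Omega>. U \<beta>)"
  proof (intro sum.cong refl)
    fix \<beta> assume "\<beta> \<in> f ` \<Omega>"
    then have "{c\<in>\<Omega>. f c = \<beta>} \<noteq> {}" by auto
    then show "(\<Sum>c\<in>{c\<in>\<Omega>. f c = \<beta>}. U (f c) / card {c'\<in>\<Omega>. f c' = f c}) = U \<beta>"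
      using fin by simp
  qed
  also have "\<dots> \<le> (\<Sum>\<beta>\<in>PiE I K. U \<beta>)"
  proof (rule sum_mono2)
    show "finite (PiE I K)" using finI finK by (simp add: finite_PiE)
    show "f ` \<Omega> \<subseteq> PiE I K" using fK by auto
    show "0 \<le> U b" if "b \<in> PiE I K - f ` \<Omega>" for b
      unfolding U_def using that upos by (intro prod_nonneg) (force simp: PiE_def Pi_def)
  qed
  also have "\<dots> = (\<Prod>i\<in>I. \<Sum>k\<in>K i. u i k)"
    unfolding U_def using finI finK by (subst prod_sum_PiE) auto
  also have "\<dots> \<le> 1"
    using usum upos by (intro prod_le_1) (force intro: sum_nonneg)+
  finally show ?thesis unfolding U_def .
qed

text \<open>If the coordinates of \<open>f\<close> can be encoded with average total code length \<open>T\<close> (code lengths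
  \<open>- ln (u i k)\<close> obeying Kraft's inequality), some fibre of \<open>f\<close> has relative size at least
  \<open>exp (-T)\<close>: this is Gibbs' inequality for the fibre distribution.\<close>

lemma entropy_pigeonhole:
  fixes \<Omega> :: "'a set" and f :: "'a \<Rightarrow> 'i \<Rightarrow> int" and u :: "'i \<Rightarrow> int \<Rightarrow> real" and T :: real
  assumes fin: "finite \<Omega>" and ne: "\<Omega> \<noteq> {}" and finI: "finite I"
    and finK: "\<And>i. i \<in> I \<Longrightarrow> finite (K i)"
    and fK: "\<And>c. c \<in> \<Omega> \<Longrightarrow> f c \<in> PiE I K"
    and upos: "\<And>i k. i \<in> I \<Longrightarrow> k \<in> K i \<Longrightarrow> u i k > 0"
    and usum: "\<And>i. i \<in> I \<Longrightarrow> (\<Sum>k\<in>K i. u i k) \<le> 1"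
    and cost: "(\<Sum>c\<in>\<Omega>. \<Sum>i\<in>I. - ln (u i (f c i))) \<le> card \<Omega> * T"
  shows "\<exists>c0\<in>\<Omega>. real (card {c\<in>\<Omega>. f c = f c0}) \<ge> card \<Omega> * exp (-T)"
proof (rule ccontr)
  assume small: "\<not> ?thesis"
  define cnt where "cnt c = real (card {c'\<in>\<Omega>. f c' = f c})" for c
  define U where "U c = (\<Prod>i\<in>I. u i (f c i))" for c
  have cnt_pos: "cnt c \<ge> 1" if "c \<in> \<Omega>" for c
  proof -
    have "{c'\<in>\<Omega>. f c' = f c} \<noteq> {}" using that by auto
    thus ?thesis unfolding cnt_def using fin by (simp add: Suc_le_eq card_gt_0_iff)
  qed
  have U_pos: "U c > 0" if "c \<in> \<Omega>" for c
    unfolding U_def using fK[OF that] upos by (intro prod_pos) (auto simp: PiE_def Pi_def)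
  have card_pos: "real (card \<Omega>) > 0" using fin ne by (simp add: card_gt_0_iff)
  have ln_fibre: "ln (card \<Omega> * U c / cnt c) = ln (card \<Omega>) - ln (cnt c) + (\<Sum>i\<in>I. ln (u i (f c i)))"
    if "c \<in> \<Omega>" for c
  proof -
    have "ln (U c) = (\<Sum>i\<in>I. ln (u i (f c i)))"
      unfolding U_def using fK[OF that] upos finI by (subst ln_prod) (force simp: PiE_def Pi_def)+
    thus ?thesis using U_pos[OF that] cnt_pos[OF that] card_pos by (simp add: ln_div ln_mult)
  qed
  have "(\<Sum>c\<in>\<Omega>. ln (card \<Omega> * U c / cnt c)) \<le> (\<Sum>c\<in>\<Omega>. card \<Omega> * U c / cnt c - 1)"
    using U_pos cnt_pos card_pos
    by (intro sum_mono ln_le_minus_one) (force intro!: divide_pos_pos mult_pos_pos)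
  also have "\<dots> = card \<Omega> * (\<Sum>c\<in>\<Omega>. U c / cnt c) - card \<Omega>"
    by (simp add: sum_subtractf sum_distrib_left)
  also have "\<dots> \<le> 0"
    using sum_fibre_weights_le_1[OF fin finI finK fK upos usum]
    by (simp add: mult_left_le U_def cnt_def)
  finally have "(\<Sum>c\<in>\<Omega>. ln (card \<Omega>) - ln (cnt c)) \<le> (\<Sum>c\<in>\<Omega>. \<Sum>i\<in>I. - ln (u i (f c i)))"
    using ln_fibre by (simp add: sum.distrib sum_negf)
  moreover have "ln (card \<Omega>) - ln (cnt c) > T" if "c \<in> \<Omega>" for c
  proof -
    have "cnt c < card \<Omega> * exp (-T)" using small that by (auto simp: cnt_def not_le)
    hence "ln (cnt c) < ln (card \<Omega> * exp (-T))"
      using cnt_pos[OF that] by (intro ln_less_cancel_iff[THEN iffD2]) auto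
    also have "\<dots> = ln (card \<Omega>) - T" using card_pos by (simp add: ln_mult)
    finally show ?thesis by simp
  qed
  then have "(\<Sum>c\<in>\<Omega>. T) < (\<Sum>c\<in>\<Omega>. ln (card \<Omega>) - ln (cnt c))"
    using fin ne by (intro sum_strict_mono) auto
  ultimately show False using cost by simp
qed


lemma sum_half_power_le_2:
  fixes S :: "nat set" assumes "finite S"
  shows "(\<Sum>n\<in>S. (1/2::real) ^ n) \<le> 2"
proof -
  obtain N where N: "\<And>n. n \<in> S \<Longrightarrow> n < N"
    using assms finite_nat_set_iff_bounded by auto
  have "(\<Sum>n\<in>S. (1/2::real) ^ n) \<le> (\<Sum>n<N. (1/2::real) ^ n)"
    using N by (intro sum_mono2) auto
  also have "\<dots> = 2 * (1 - (1/2)^N)" by (simp add: sum_gp_strict)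
  also have "\<dots> \<le> 2" by simp
  finally show ?thesis .
qed

lemma sum_half_power_abs_le_4:
  fixes F :: "int set" assumes "finite F"
  shows "(\<Sum>k\<in>F - {0}. (1/2::real) ^ nat \<bar>k\<bar>) \<le> 4"
proof -
  have split: "F - {0} = {k\<in>F. k > 0} \<union> {k\<in>F. k < 0}" by auto
  have "(\<Sum>k\<in>F - {0}. (1/2::real) ^ nat \<bar>k\<bar>)
      = (\<Sum>k\<in>{k\<in>F. k > 0}. (1/2::real) ^ nat \<bar>k\<bar>) + (\<Sum>k\<in>{k\<in>F. k < 0}. (1/2::real) ^ nat \<bar>k\<bar>)"
    unfolding split using assms by (intro sum.union_disjoint) auto
  also have "(\<Sum>k\<in>{k\<in>F. k > 0}. (1/2::real) ^ nat \<bar>k\<bar>) = (\<Sum>n\<in>(\<lambda>k. nat \<bar>k\<bar>) ` {k\<in>F. k > 0}. (1/2::real) ^ n)"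
    by (subst sum.reindex) (auto simp: inj_on_def)
  also have "\<dots> \<le> 2" using assms by (intro sum_half_power_le_2) auto
  also have "(\<Sum>k\<in>{k\<in>F. k < 0}. (1/2::real) ^ nat \<bar>k\<bar>) = (\<Sum>n\<in>(\<lambda>k. nat \<bar>k\<bar>) ` {k\<in>F. k < 0}. (1/2::real) ^ n)"
    by (subst sum.reindex) (auto simp: inj_on_def)
  also have "\<dots> \<le> 2" using assms by (intro sum_half_power_le_2) auto
  finally show ?thesis by simp
qed

lemma linear_le_exp:
  fixes t :: real assumes "t \<ge> 20"
  shows "10 + 4 * t \<le> exp t"
proof -
  have "(1 + t/2)^2 \<le> exp (t/2) ^ 2"
    using assms by (intro power_mono exp_ge_add_one_self) auto
  also have "exp (t/2) ^ 2 = exp t" by (simp flip: exp_of_nat_mult)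
  finally have sq: "(1 + t/2)^2 \<le> exp t" .
  have "(14::real)^2 \<le> (t-6)^2" using assms by (intro power_mono) auto
  hence "10 + 4 * t \<le> (1 + t/2)^2"
    by (simp add: power2_eq_square algebra_simps)
  with sq show ?thesis by linarith
qed

lemma minus_ln_one_minus_le:
  fixes e :: real assumes "0 \<le> e" "e \<le> 1/2"
  shows "- ln (1 - e) \<le> 2 * e"
proof -
  have "- ln (1 - e) = ln (1 / (1 - e))" using assms by (simp add: ln_div)
  also have "\<dots> \<le> 1/(1-e) - 1" using assms by (intro ln_le_minus_one) auto
  also have "\<dots> = e/(1-e)" using assms by (simp add: field_simps)
  also have "\<dots> \<le> e / (1/2)" using assms by (intro divide_left_mono) auto
  finally show ?thesis by simp
qed

definition grid_index :: "real \<Rightarrow> real \<Rightarrow> int" where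
  "grid_index D t = \<lfloor>t / (2*D) + 1/2\<rfloor>"

lemma grid_index_abs_le:
  fixes t D :: real assumes D: "D > 0"
  shows "D * \<bar>of_int (grid_index D t)\<bar> \<le> \<bar>t\<bar>"
proof -
  define b where "b = grid_index D t"
  have "of_int b \<le> t/(2*D) + 1/2" "t/(2*D) + 1/2 < of_int b + 1"
    unfolding b_def grid_index_def by linarith+
  then have lower: "2 * D * of_int b \<le> t + D" and upper: "t + D < 2 * D * (of_int b + 1)"
    using D by (simp_all add: field_simps)
  consider "b = 0" | "b \<ge> 1" | "b \<le> -1" by linarith
  then show ?thesis
  proof cases
    case 2
    then have "D \<le> D * of_int b" using D by simp
    then show ?thesis using lower 2 unfolding b_def by simp
  next
    case 3
    then have "D * of_int b \<le> - D" using mult_left_mono[of "of_int b" "-1" D] D by simp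
    then show ?thesis using upper 3 unfolding b_def by (simp add: algebra_simps)
  qed (simp add: b_def)
qed

lemma grid_index_eq_imp_dist_less:
  fixes s t D :: real assumes D: "D > 0" and eq: "grid_index D s = grid_index D t"
  shows "\<bar>s - t\<bar> < 2 * D"
proof -
  have "\<bar>s/(2*D) - t/(2*D)\<bar> < 1"
    using eq unfolding grid_index_def by linarith
  then have "\<bar>s - t\<bar> / (2*D) < 1" using D by (simp add: diff_divide_distrib[symmetric] abs_divide)
  then show ?thesis using D by (simp add: field_simps)
qed

text \<open>A prefix code for grid indices: the central cell has probability \<open>1 - exp (-\<kappa>/2)\<close> and the
  other cells share the rest geometrically. For \<open>\<kappa> = D\<^sup>2 / V\<close> the central cell is the likely one
  by the Chernoff bound.\<close>

definition rounding_weight :: "real \<Rightarrow> int \<Rightarrow> real" where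
  "rounding_weight \<kappa> k =
     (if k = 0 then 1 - exp (-\<kappa>/2) else exp (-\<kappa>/2) / 4 * (1/2) ^ nat \<bar>k\<bar>)"

lemma rounding_weight_pos: "\<kappa> > 0 \<Longrightarrow> rounding_weight \<kappa> k > 0"
  by (simp add: rounding_weight_def)

lemma sum_rounding_weight_le_1:
  assumes "\<kappa> \<ge> 0" and K: "finite K"
  shows "(\<Sum>k\<in>K. rounding_weight \<kappa> k) \<le> 1"
proof -
  define e where "e = exp (-\<kappa>/2)"
  have e: "0 < e" "e \<le> 1" using assms unfolding e_def by auto
  have "(\<Sum>k\<in>K. rounding_weight \<kappa> k) = (\<Sum>k\<in>K \<inter> {0}. rounding_weight \<kappa> k) + (\<Sum>k\<in>K - {0}. rounding_weight \<kappa> k)"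
    using K by (metis sum.Int_Diff)
  also have "(\<Sum>k\<in>K \<inter> {0}. rounding_weight \<kappa> k) \<le> 1 - e"
    using e by (cases "0 \<in> K") (auto simp: rounding_weight_def e_def Int_insert_right)
  also have "(\<Sum>k\<in>K - {0}. rounding_weight \<kappa> k) = e / 4 * (\<Sum>k\<in>K - {0}. (1/2) ^ nat \<bar>k\<bar>)"
    by (simp add: rounding_weight_def e_def sum_distrib_left)
  also have "\<dots> \<le> e / 4 * 4"
    using e K by (intro mult_left_mono sum_half_power_abs_le_4) auto
  finally show ?thesis by simp
qed

lemma neg_ln_rounding_weight_le:
  fixes \<kappa> D t :: real
  assumes \<kappa>: "\<kappa> \<ge> 80" and D: "D > 0"
  shows "- ln (rounding_weight \<kappa> (grid_index D t))
           \<le> 2 * exp (-\<kappa>/2) + (4 + \<kappa>/2) * exp (\<kappa> / D * \<bar>t\<bar> - \<kappa>)"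
proof (cases "grid_index D t = 0")
  case True
  have "1 + \<kappa>/2 \<le> exp (\<kappa>/2)" by (rule exp_ge_add_one_self)
  then have "exp (-\<kappa>/2) \<le> 1/2" using \<kappa> by (simp add: exp_minus field_simps)
  then have "- ln (1 - exp (-\<kappa>/2)) \<le> 2 * exp (-\<kappa>/2)"
    by (intro minus_ln_one_minus_le) auto
  moreover have "0 \<le> (4 + \<kappa>/2) * exp (\<kappa> / D * \<bar>t\<bar> - \<kappa>)" using \<kappa> by simp
  ultimately show ?thesis using True by (simp add: rounding_weight_def)
next
  case False
  define b where "b = grid_index D t"
  define y where "y = \<bar>t\<bar> / D"
  have "D * \<bar>of_int b\<bar> \<le> \<bar>t\<bar>" unfolding b_def using grid_index_abs_le[OF D] .
  then have yb: "\<bar>of_int b\<bar> \<le> y" unfolding y_def using D by (simp add: field_simps)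
  have y1: "y \<ge> 1" using yb False unfolding b_def by linarith
  have "- ln (rounding_weight \<kappa> b) = ln 4 + \<kappa>/2 + nat \<bar>b\<bar> * ln 2"
    using False by (simp add: b_def rounding_weight_def ln_mult ln_div ln_realpow)
  also have "\<dots> \<le> 3 + \<kappa>/2 + \<bar>of_int b\<bar>"
  proof -
    have "ln (4::real) \<le> 3" using ln_le_minus_one[of 4] by simp
    moreover have "nat \<bar>b\<bar> * ln 2 \<le> nat \<bar>b\<bar> * (1::real)"
      using ln_le_minus_one[of 2] by (intro mult_left_mono) auto
    ultimately show ?thesis by simp
  qed
  also have "\<dots> \<le> (3 + \<kappa>/2) + y" using yb by simp
  also have "\<dots> \<le> (4 + \<kappa>/2) * (1 + \<kappa> * (y - 1))"
  proof -
    have "1 * 1 \<le> (4 + \<kappa>/2) * \<kappa>" using \<kappa> by (intro mult_mono) auto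
    then have "y - 1 \<le> (4 + \<kappa>/2) * \<kappa> * (y - 1)"
      using y1 mult_right_mono[of 1 "(4 + \<kappa>/2) * \<kappa>" "y - 1"] by simp
    moreover have "(4 + \<kappa>/2) * (1 + \<kappa> * (y - 1)) = (4 + \<kappa>/2) + (4 + \<kappa>/2) * \<kappa> * (y - 1)"
      by (simp add: distrib_left)
    ultimately show ?thesis by linarith
  qed
  also have "\<dots> \<le> (4 + \<kappa>/2) * exp (\<kappa> * (y - 1))"
    using \<kappa> by (intro mult_left_mono exp_ge_add_one_self) auto
  also have "\<kappa> * (y - 1) = \<kappa> / D * \<bar>t\<bar> - \<kappa>"
    unfolding y_def using D by (simp add: field_simps)
  finally show ?thesis unfolding b_def by (smt (verit) exp_gt_zero)
qed

lemma sum_colorings_exp_abs_le: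
  fixes w :: "nat \<Rightarrow> real" and \<theta> V :: real
  assumes X: "finite X" and wV: "(\<Sum>x\<in>X. (w x)^2) \<le> V"
  shows "(\<Sum>c\<in>colorings X. exp (\<theta> * \<bar>\<Sum>x\<in>X. w x * c x\<bar>)) \<le> 2 * 2 ^ card X * exp (\<theta>^2 * V / 2)"
proof -
  define L where "L c = (\<Sum>x\<in>X. w x * c x)" for c :: "nat \<Rightarrow> int"
  have "(\<Sum>c\<in>colorings X. exp (\<theta> * \<bar>L c\<bar>))
      \<le> (\<Sum>c\<in>colorings X. exp (\<theta> * L c)) + (\<Sum>c\<in>colorings X. exp ((-\<theta>) * L c))"
    by (subst sum.distrib[symmetric], intro sum_mono) (auto simp: abs_if)
  also have "\<dots> \<le> 2 ^ card X * exp (\<theta>^2 * (\<Sum>x\<in>X. (w x)^2) / 2)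
                  + 2 ^ card X * exp ((-\<theta>)^2 * (\<Sum>x\<in>X. (w x)^2) / 2)"
    unfolding L_def using X by (intro add_mono sum_colorings_exp_le)
  also have "\<dots> \<le> 2 ^ card X * exp (\<theta>^2 * V / 2) + 2 ^ card X * exp (\<theta>^2 * V / 2)"
    using wV by (intro add_mono mult_left_mono) (auto intro: mult_left_mono divide_right_mono)
  finally show ?thesis unfolding L_def by simp
qed

text \<open>The expected code length of the grid index of \<open>\<Sum> w x c x\<close> at threshold \<open>D\<close> is
  \<open>exp (-\<kappa>/4)\<close>, \<open>\<kappa> = D\<^sup>2 / V\<close>: the \<open>exp (-\<kappa>/2)\<close> from the Chernoff bound beats the polynomial
  factor \<open>10 + \<kappa>\<close> once \<open>\<kappa> \<ge> 80\<close>.\<close>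

lemma sum_neg_ln_rounding_weight_le:
  fixes w :: "nat \<Rightarrow> real" and D V :: real
  assumes X: "finite X" and V: "V > 0" and wV: "(\<Sum>x\<in>X. (w x)^2) \<le> V" and D: "D > 0"
    and DV: "D^2 \<ge> 80 * V"
  shows "(\<Sum>c\<in>colorings X. - ln (rounding_weight (D^2/V) (grid_index D (\<Sum>x\<in>X. w x * c x))))
           \<le> 2 ^ card X * exp (-(D^2/V)/4)"
proof -
  define \<kappa> where "\<kappa> = D^2/V"
  define e where "e = exp (-\<kappa>/2)"
  define L where "L c = (\<Sum>x\<in>X. w x * c x)" for c :: "nat \<Rightarrow> int"
  have \<kappa>: "\<kappa> \<ge> 80" using DV V unfolding \<kappa>_def by (simp add: field_simps)
  have \<theta>: "(\<kappa> / D)^2 * V / 2 = \<kappa>/2"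
    unfolding \<kappa>_def using D V by (simp add: field_simps power2_eq_square)
  have "(\<Sum>c\<in>colorings X. - ln (rounding_weight \<kappa> (grid_index D (L c))))
      \<le> (\<Sum>c\<in>colorings X. 2 * e + (4 + \<kappa>/2) * exp (-\<kappa>) * exp (\<kappa> / D * \<bar>L c\<bar>))"
    using neg_ln_rounding_weight_le[OF \<kappa> D] unfolding e_def
    by (intro sum_mono) (simp add: exp_diff exp_minus field_simps)
  also have "\<dots> = 2 ^ card X * (2 * e) + (4 + \<kappa>/2) * exp (-\<kappa>) * (\<Sum>c\<in>colorings X. exp (\<kappa> / D * \<bar>L c\<bar>))"
    using X by (simp add: sum.distrib sum_distrib_left card_colorings)
  also have "\<dots> \<le> 2 ^ card X * (2 * e) + (4 + \<kappa>/2) * exp (-\<kappa>) * (2 * 2 ^ card X * exp (\<kappa>/2))"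
    using sum_colorings_exp_abs_le[OF X wV, of "\<kappa> / D"] \<kappa> unfolding L_def \<theta>
    by (intro add_left_mono mult_left_mono) auto
  also have "\<dots> = 2 ^ card X * (e * (10 + \<kappa>))"
    unfolding e_def by (simp add: algebra_simps flip: exp_add)
  also have "\<dots> \<le> 2 ^ card X * exp (-\<kappa>/4)"
  proof -
    have "e * (10 + 4 * (\<kappa>/4)) \<le> e * exp (\<kappa>/4)"
      using \<kappa> unfolding e_def by (intro mult_left_mono linear_le_exp) auto
    also have "e * exp (\<kappa>/4) = exp (-\<kappa>/4)" unfolding e_def by (simp flip: exp_add)
    finally show ?thesis by simp
  qed
  finally show ?thesis unfolding \<kappa>_def L_def .
qed

lemma sum_Pow_power_card:
  fixes a :: real assumes "finite F"
  shows "(\<Sum>S\<in>Pow F. a ^ card S) = (1 + a) ^ card F"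
  using prod_add[OF assms, of "\<lambda>_. a" "\<lambda>_. 1"] by (simp add: add.commute)

lemma card_small_subsets_le:
  fixes X :: "'a set" and t :: real
  assumes X: "finite X"
  shows "real (card {S\<in>Pow X. real (card S) < t}) \<le> (5/4) ^ card X * 4 powr t"
proof -
  have "real (card {S\<in>Pow X. real (card S) < t}) = (\<Sum>S\<in>{S\<in>Pow X. real (card S) < t}. 1)"
    by simp
  also have "\<dots> \<le> (\<Sum>S\<in>{S\<in>Pow X. real (card S) < t}. (1/4) ^ card S * 4 powr t)"
  proof (intro sum_mono)
    fix S assume "S \<in> {S\<in>Pow X. real (card S) < t}"
    then have "1 \<le> (4::real) powr (t - card S)" by (intro ge_one_powr_ge_zero) auto
    also have "\<dots> = (1/4) ^ card S * 4 powr t"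
      by (simp add: powr_diff powr_realpow power_one_over)
    finally show "1 \<le> (1/4::real) ^ card S * 4 powr t" .
  qed
  also have "\<dots> \<le> (\<Sum>S\<in>Pow X. (1/4) ^ card S * 4 powr t)"
    using X by (intro sum_mono2) auto
  also have "\<dots> = (5/4) ^ card X * 4 powr t"
    using X by (simp add: sum_distrib_right[symmetric] sum_Pow_power_card)
  finally show ?thesis .
qed

lemma five_quarters_power_le:
  assumes "m > 0"
  shows "(5/4) ^ m * 4 powr (m/10) < 2 ^ m * exp (- (m / 10))"
proof -
  have "4 powr (m/10) * exp (m/10) = (4 * exp 1) powr (m/10)"
    by (simp add: powr_def ln_mult add_divide_distrib distrib_left flip: exp_add)
  also have "\<dots> < ((8/5)^10) powr (m/10)"
  proof (rule powr_less_mono2)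
    have "(8/5::real)^10 = 1073741824 / 9765625" by (simp add: power_divide)
    then show "4 * exp 1 < ((8/5::real)^10)" using exp_le by simp
  qed (use assms in auto)
  also have "\<dots> = (8/5) ^ m"
  proof -
    have a: "(8/5::real)^10 = (8/5) powr (real 10)" by (rule powr_realpow[symmetric]) simp
    have b: "((8/5::real) powr (real 10)) powr (real m / 10) = (8/5) powr (real m)"
      by (simp only: powr_powr) simp
    show ?thesis unfolding a b by (rule powr_realpow) simp
  qed
  finally have "4 powr (m/10) * exp (m/10) < (8/5) ^ m" .
  then have "(5/4) ^ m * (4 powr (m/10) * exp (m/10)) < (5/4)^m * (8/5) ^ m" by simp
  also have "\<dots> = 2 ^ m" by (simp flip: power_mult_distrib)
  finally show ?thesis by (simp add: exp_minus field_simps)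
qed

lemma card_close_colorings_less:
  fixes c0 :: "nat \<Rightarrow> int"
  assumes X: "finite X" "card X > 0" and c0: "c0 \<in> colorings X"
  shows "real (card {c\<in>colorings X. real (card {x\<in>X. c0 x \<noteq> c x}) < card X / 10})
         < 2 ^ card X * exp (- (card X / 10))"
proof -
  define h where "h c = {x\<in>X. c0 x \<noteq> c x}" for c :: "nat \<Rightarrow> int"
  have "inj_on h (colorings X)"
  proof (rule inj_onI)
    fix c c' assume c: "c \<in> colorings X" and c': "c' \<in> colorings X" and e: "h c = h c'"
    show "c = c'"
    proof (rule extensionalityI[where A = X])
      show "c \<in> extensional X" "c' \<in> extensional X" using c c' by (auto simp: colorings_def PiE_def)
      fix x assume x: "x \<in> X"
      have "c x \<in> {-1,1}" "c' x \<in> {-1,1}" "c0 x \<in> {-1,1}"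
        using c c' c0 x by (auto simp: colorings_def PiE_def Pi_def)
      moreover have "(c0 x \<noteq> c x) = (c0 x \<noteq> c' x)" using e x unfolding h_def by blast
      ultimately show "c x = c' x" by auto
    qed
  qed
  then have "card {c\<in>colorings X. real (card (h c)) < card X / 10}
        = card (h ` {c\<in>colorings X. real (card (h c)) < card X / 10})"
    by (intro card_image[symmetric]) (auto intro: inj_on_subset)
  also have "\<dots> \<le> card {S\<in>Pow X. real (card S) < card X / 10}"
    using X by (intro card_mono) (auto simp: h_def)
  finally have "real (card {c\<in>colorings X. real (card (h c)) < card X / 10})
      \<le> (5/4) ^ card X * 4 powr (card X / 10)"
    using card_small_subsets_le[OF X(1), of "card X / 10"] by linarith
  also have "\<dots> < 2 ^ card X * exp (- (card X / 10))"
    using five_quarters_power_le X(2) by simp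
  finally show ?thesis unfolding h_def .
qed

lemma half_difference_coloring:
  fixes c0 c1 :: "nat \<Rightarrow> int" and w :: "nat \<Rightarrow> real"
  assumes c0: "c0 \<in> colorings X" and c1: "c1 \<in> colorings X" and X: "finite X"
  defines "col \<equiv> \<lambda>x. (c0 x - c1 x) div 2"
  shows "\<forall>x\<in>X. col x \<in> {-1, 0, 1}"
    and "{x\<in>X. col x \<noteq> 0} = {x\<in>X. c0 x \<noteq> c1 x}"
    and "(\<Sum>x\<in>X. w x * col x) = ((\<Sum>x\<in>X. w x * c0 x) - (\<Sum>x\<in>X. w x * c1 x)) / 2"
proof -
  have vals: "c0 x \<in> {-1,1}" "c1 x \<in> {-1,1}" if "x \<in> X" for x
    using c0 c1 that unfolding colorings_def by (auto simp: PiE_def Pi_def)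
  show "\<forall>x\<in>X. col x \<in> {-1, 0, 1}" using vals unfolding col_def by fastforce
  show "{x\<in>X. col x \<noteq> 0} = {x\<in>X. c0 x \<noteq> c1 x}" using vals unfolding col_def by fastforce
  have "real_of_int (col x) = (c0 x - c1 x) / 2" if "x \<in> X" for x
    using vals[OF that] unfolding col_def by auto
  then have "(\<Sum>x\<in>X. w x * col x) = (\<Sum>x\<in>X. (w x * c0 x - w x * c1 x) / 2)"
    by (intro sum.cong) (auto simp: diff_divide_distrib[symmetric] right_diff_distrib[symmetric])
  then show "(\<Sum>x\<in>X. w x * col x) = ((\<Sum>x\<in>X. w x * c0 x) - (\<Sum>x\<in>X. w x * c1 x)) / 2"
    by (simp add: sum_subtractf sum_divide_distrib[symmetric])
qed

lemma large_rounding_class: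
  fixes X :: "nat set" and I :: "'i set" and w :: "'i \<Rightarrow> nat \<Rightarrow> real" and D V :: "'i \<Rightarrow> real"
  assumes X: "finite X" and I: "finite I"
    and V: "\<And>i. i \<in> I \<Longrightarrow> V i > 0"
    and wV: "\<And>i. i \<in> I \<Longrightarrow> (\<Sum>x\<in>X. (w i x)^2) \<le> V i"
    and D: "\<And>i. i \<in> I \<Longrightarrow> D i > 0"
    and DV: "\<And>i. i \<in> I \<Longrightarrow> (D i)^2 \<ge> 80 * V i"
    and T: "(\<Sum>i\<in>I. exp (-((D i)^2 / V i)/4)) \<le> T"
  shows "\<exists>c0\<in>colorings X. real (card {c\<in>colorings X.
           \<forall>i\<in>I. grid_index (D i) (\<Sum>x\<in>X. w i x * c x) = grid_index (D i) (\<Sum>x\<in>X. w i x * c0 x)})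
           \<ge> 2 ^ card X * exp (-T)"
proof -
  define \<Omega> where "\<Omega> = colorings X"
  define L where "L i c = (\<Sum>x\<in>X. w i x * c x)" for i and c :: "nat \<Rightarrow> int"
  define f where "f c = (\<lambda>i\<in>I. grid_index (D i) (L i c))" for c
  have fin\<Omega>: "finite \<Omega>" unfolding \<Omega>_def using X by (rule finite_colorings)
  have card\<Omega>: "real (card \<Omega>) = 2 ^ card X" unfolding \<Omega>_def using X by (simp add: card_colorings)
  have \<kappa>: "(D i)^2 / V i > 0" if "i \<in> I" for i using D[OF that] V[OF that] by simp
  then have \<kappa>': "(D i)^2 / V i \<ge> 0" if "i \<in> I" for i using that less_imp_le by blast
  have "\<exists>c0\<in>\<Omega>. real (card {c\<in>\<Omega>. f c = f c0}) \<ge> card \<Omega> * exp (-T)"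
  proof (rule entropy_pigeonhole[where u = "\<lambda>i. rounding_weight ((D i)^2 / V i)"
        and K = "\<lambda>i. (\<lambda>c. grid_index (D i) (L i c)) ` \<Omega>"])
    show "\<Omega> \<noteq> {}" using card\<Omega> by auto
    have "(\<Sum>c\<in>\<Omega>. \<Sum>i\<in>I. - ln (rounding_weight ((D i)^2 / V i) (f c i)))
        = (\<Sum>i\<in>I. \<Sum>c\<in>\<Omega>. - ln (rounding_weight ((D i)^2 / V i) (grid_index (D i) (L i c))))"
      by (subst sum.swap) (auto simp: f_def intro!: sum.cong)
    also have "\<dots> \<le> (\<Sum>i\<in>I. 2 ^ card X * exp (-((D i)^2 / V i)/4))"
      using sum_neg_ln_rounding_weight_le[OF X V wV D DV]
      unfolding \<Omega>_def L_def by (intro sum_mono) auto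
    also have "\<dots> \<le> card \<Omega> * T"
      using T unfolding card\<Omega> by (simp add: sum_distrib_left[symmetric])
    finally show "(\<Sum>c\<in>\<Omega>. \<Sum>i\<in>I. - ln (rounding_weight ((D i)^2 / V i) (f c i))) \<le> card \<Omega> * T" .
  qed (use fin\<Omega> I \<kappa> \<kappa>' in \<open>auto simp: f_def intro!: rounding_weight_pos sum_rounding_weight_le_1\<close>)
  then obtain c0 where c0: "c0 \<in> \<Omega>" and big: "real (card {c\<in>\<Omega>. f c = f c0}) \<ge> card \<Omega> * exp (-T)" ..
  have "f c = f c0 \<longleftrightarrow> (\<forall>i\<in>I. grid_index (D i) (L i c) = grid_index (D i) (L i c0))" for c
  proof
    show "\<forall>i\<in>I. grid_index (D i) (L i c) = grid_index (D i) (L i c0)" if "f c = f c0"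
    proof
      fix i assume "i \<in> I"
      then show "grid_index (D i) (L i c) = grid_index (D i) (L i c0)"
        using fun_cong[OF that, of i] by (simp add: f_def)
    qed
    show "f c = f c0" if "\<forall>i\<in>I. grid_index (D i) (L i c) = grid_index (D i) (L i c0)"
      unfolding f_def using that by (intro restrict_ext) simp
  qed
  then have "real (card {c\<in>colorings X. \<forall>i\<in>I.
      grid_index (D i) (\<Sum>x\<in>X. w i x * c x) = grid_index (D i) (\<Sum>x\<in>X. w i x * c0 x)})
      \<ge> 2 ^ card X * exp (-T)"
    using big unfolding \<Omega>_def L_def by (simp add: card_colorings[OF X])
  then show ?thesis using c0 unfolding \<Omega>_def by blast
qed

lemma partial_coloring:
  fixes X :: "nat set" and I :: "'i set" and w :: "'i \<Rightarrow> nat \<Rightarrow> real" and D V :: "'i \<Rightarrow> real"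
  assumes X: "finite X" "card X > 0" and I: "finite I"
    and V: "\<And>i. i \<in> I \<Longrightarrow> V i > 0"
    and wV: "\<And>i. i \<in> I \<Longrightarrow> (\<Sum>x\<in>X. (w i x)^2) \<le> V i"
    and D: "\<And>i. i \<in> I \<Longrightarrow> D i > 0"
    and DV: "\<And>i. i \<in> I \<Longrightarrow> (D i)^2 \<ge> 80 * V i"
    and T: "(\<Sum>i\<in>I. exp (-((D i)^2 / V i)/4)) \<le> card X / 10"
  shows "\<exists>col::nat\<Rightarrow>int. (\<forall>x\<in>X. col x \<in> {-1,0,1}) \<and> real (card {x\<in>X. col x \<noteq> 0}) \<ge> card X / 10
           \<and> (\<forall>i\<in>I. \<bar>\<Sum>x\<in>X. w i x * col x\<bar> \<le> D i)"
proof -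
  define L where "L i c = (\<Sum>x\<in>X. w i x * c x)" for i and c :: "nat \<Rightarrow> int"
  define fibre where "fibre c0 = {c\<in>colorings X. \<forall>i\<in>I. grid_index (D i) (L i c) = grid_index (D i) (L i c0)}"
    for c0
  obtain c0 where c0: "c0 \<in> colorings X" and big: "real (card (fibre c0)) \<ge> 2 ^ card X * exp (- (card X / 10))"
    using large_rounding_class[OF X(1) I V wV D DV T] unfolding fibre_def L_def by blast
  have "\<exists>c1\<in>fibre c0. real (card {x\<in>X. c0 x \<noteq> c1 x}) \<ge> card X / 10"
  proof (rule ccontr)
    assume "\<not> ?thesis"
    then have "fibre c0 \<subseteq> {c\<in>colorings X. real (card {x\<in>X. c0 x \<noteq> c x}) < card X / 10}"
      unfolding fibre_def by auto
    then have "card (fibre c0) \<le> card {c\<in>colorings X. real (card {x\<in>X. c0 x \<noteq> c x}) < card X / 10}"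
      using finite_colorings[OF X(1)] by (intro card_mono) auto
    with card_close_colorings_less[OF X c0] big show False by linarith
  qed
  then obtain c1 where c1: "c1 \<in> colorings X"
    and same: "\<forall>i\<in>I. grid_index (D i) (L i c1) = grid_index (D i) (L i c0)"
    and far: "real (card {x\<in>X. c0 x \<noteq> c1 x}) \<ge> card X / 10"
    unfolding fibre_def by auto
  note half = half_difference_coloring[OF c0 c1 X(1)]
  show ?thesis
  proof (intro exI[of _ "\<lambda>x. (c0 x - c1 x) div 2"] conjI)
    show "\<forall>x\<in>X. (c0 x - c1 x) div 2 \<in> {-1,0,1}" by (rule half(1))
    show "real (card {x\<in>X. (c0 x - c1 x) div 2 \<noteq> 0}) \<ge> card X / 10" using far half(2) by simp
    show "\<forall>i\<in>I. \<bar>\<Sum>x\<in>X. w i x * ((c0 x - c1 x) div 2)\<bar> \<le> D i"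
    proof
      fix i assume i: "i \<in> I"
      then have "grid_index (D i) (L i c0) = grid_index (D i) (L i c1)" using same by simp
      then have "\<bar>L i c0 - L i c1\<bar> < 2 * D i" by (rule grid_index_eq_imp_dist_less[OF D[OF i]])
      moreover have "(\<Sum>x\<in>X. w i x * ((c0 x - c1 x) div 2)) = (L i c0 - L i c1) / 2"
        unfolding L_def by (rule half(3))
      ultimately show "\<bar>\<Sum>x\<in>X. w i x * ((c0 x - c1 x) div 2)\<bar> \<le> D i" by simp
    qed
  qed
qed

lemma sum_pairs_atLeastLessThan:
  fixes f :: "nat \<Rightarrow> 'a::comm_monoid_add"
  shows "(\<Sum>\<rho>\<in>{s..<s+t}. f (2 * \<rho>) + f (2 * \<rho>+1)) = (\<Sum>\<rho>\<in>{2 * s..<2 * s+2 * t}. f \<rho>)"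
proof (induction t)
  case (Suc t)
  have "{2 * s..<2 * s+2 * Suc t} = {2 * s..<2 * s+2 * t} \<union> {2 * s+2 * t, 2 * s+2 * t+1}" by auto
  then have "(\<Sum>\<rho>\<in>{2 * s..<2 * s+2 * Suc t}. f \<rho>)
      = (\<Sum>\<rho>\<in>{2 * s..<2 * s+2 * t}. f \<rho>) + (f (2 * s+2 * t) + f (2 * s+2 * t+1))"
    by (simp add: sum.union_disjoint ac_simps)
  then show ?case using Suc by (simp add: add.assoc algebra_simps)
qed simp

text \<open>The block of \<open>2^j\<close> integers that bit \<open>j\<close> of \<open>u\<close> contributes to \<open>{..<u}\<close>, where
  \<open>q = u div 2^(j+1)\<close>.\<close>

definition dyadic_block :: "nat \<Rightarrow> nat \<Rightarrow> nat set" where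
  "dyadic_block q j = {q * 2^(j+1) ..< q * 2^(j+1) + 2^j}"

lemma sum_pairs_dyadic_block:
  fixes f :: "nat \<Rightarrow> 'a::comm_monoid_add"
  shows "(\<Sum>\<rho>\<in>dyadic_block q j. f (2 * \<rho>) + f (2 * \<rho>+1)) = (\<Sum>\<rho>\<in>dyadic_block q (Suc j). f \<rho>)"
proof -
  have "{2 * (q * 2^(j+1)) ..< 2 * (q * 2^(j+1)) + 2 * 2^j} = dyadic_block q (Suc j)"
    by (simp add: dyadic_block_def algebra_simps)
  then show ?thesis unfolding dyadic_block_def by (simp only: sum_pairs_atLeastLessThan)
qed

lemma sum_lessThan_dyadic_blocks:
  fixes f :: "nat \<Rightarrow> 'a::comm_monoid_add"
  assumes "u < 2^J"
  shows "(\<Sum>\<rho><u. f \<rho>) = (\<Sum>j<J. if odd (u div 2^j) then (\<Sum>\<rho>\<in>dyadic_block (u div 2^(j+1)) j. f \<rho>) else 0)"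
  using assms
proof (induction J arbitrary: u f)
  case (Suc J)
  define v where "v = u div 2"
  have v: "v < 2^J" using Suc.prems unfolding v_def by simp
  have div_Suc: "u div 2^(Suc j) = v div 2^j" for j unfolding v_def by (simp add: div_mult2_eq)
  have "(\<Sum>\<rho><u. f \<rho>) = (if odd u then f (2 * v) else 0) + (\<Sum>\<rho><2 * v. f \<rho>)"
  proof (cases "odd u")
    case True
    then have "u = Suc (2 * v)" unfolding v_def by presburger
    then show ?thesis using True by (simp add: add.commute)
  next
    case False
    then have "u = 2 * v" unfolding v_def by presburger
    then show ?thesis using False by simp
  qed
  also have "(\<Sum>\<rho><2 * v. f \<rho>) = (\<Sum>\<rho><v. f (2 * \<rho>) + f (2 * \<rho> + 1))"
    using sum_pairs_atLeastLessThan[of f 0 v] by (simp add: atLeast0LessThan)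
  also have "\<dots> = (\<Sum>j<J. if odd (v div 2^j)
      then (\<Sum>\<rho>\<in>dyadic_block (v div 2^(j+1)) j. f (2 * \<rho>) + f (2 * \<rho> + 1)) else 0)"
    using Suc.IH[OF v] .
  also have "\<dots> = (\<Sum>j<J. if odd (u div 2^(Suc j))
      then (\<Sum>\<rho>\<in>dyadic_block (u div 2^(Suc j + 1)) (Suc j). f \<rho>) else 0)"
  proof (intro sum.cong refl)
    fix j
    have "u div 2^(Suc j + 1) = v div 2^(j+1)" using div_Suc[of "j+1"] by simp
    then show "(if odd (v div 2^j)
        then (\<Sum>\<rho>\<in>dyadic_block (v div 2^(j+1)) j. f (2 * \<rho>) + f (2 * \<rho> + 1)) else 0)
      = (if odd (u div 2^(Suc j)) then (\<Sum>\<rho>\<in>dyadic_block (u div 2^(Suc j + 1)) (Suc j). f \<rho>) else 0)"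
      unfolding div_Suc sum_pairs_dyadic_block by simp
  qed
  also have "(if odd u then f (2 * v) else 0)
      = (if odd (u div 2^0) then (\<Sum>\<rho>\<in>dyadic_block (u div 2^(0+1)) 0. f \<rho>) else 0)"
  proof -
    have "dyadic_block (u div 2^(0+1)) 0 = {2 * v}" by (simp add: dyadic_block_def v_def mult.commute)
    then show ?thesis by simp
  qed
  finally show ?case unfolding sum.lessThan_Suc_shift by (simp add: add.commute)
qed simp

text \<open>Step \<open>k\<close> of the walk with difference \<open>d\<close> through the coset \<open>r + d Z\<^sub>n\<close>; for
  \<open>r < gcd n d\<close> these cosets are disjoint and each has \<open>walk_period n d\<close> elements.\<close>

definition walk :: "nat \<Rightarrow> nat \<Rightarrow> nat \<Rightarrow> nat \<Rightarrow> nat" where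
  "walk n d r k = (r + k * d) mod n"

definition walk_period :: "nat \<Rightarrow> nat \<Rightarrow> nat" where
  "walk_period n d = n div gcd n d"

lemma gcd_mult_period: "n > 0 \<Longrightarrow> gcd n d * walk_period n d = n"
  unfolding walk_period_def by simp

lemma walk_period_pos: "n > 0 \<Longrightarrow> walk_period n d > 0"
  unfolding walk_period_def by (simp add: div_greater_zero_iff)

lemma walk_mod_gcd:
  assumes "n > 0" "r < gcd n d"
  shows "walk n d r k mod gcd n d = r"
proof -
  have "walk n d r k mod gcd n d = (r + k * d) mod gcd n d"
    unfolding walk_def by (rule mod_mod_cancel) simp
  also have "\<dots> = r mod gcd n d"
    by (metis dvd_mult gcd_dvd2 mod_add_right_eq add.right_neutral dvd_imp_mod_0 mult.commute mod_mult_self1_is_0)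
  also have "\<dots> = r" using assms by simp
  finally show ?thesis .
qed

lemma walk_eq_imp_same_coset:
  assumes n: "n > 0" and r: "r < gcd n d" "r' < gcd n d"
    and e: "walk n d r k = walk n d r' k'"
  shows "r = r' \<and> k mod walk_period n d = k' mod walk_period n d"
proof -
  have rr: "r = r'" using walk_mod_gcd[OF n r(1), of k] walk_mod_gcd[OF n r(2), of k'] e by simp
  define g where "g = gcd n d"
  define N where "N = walk_period n d"
  define d' where "d' = d div g"
  have gpos: "g > 0" using n unfolding g_def by simp
  have nN: "n = N * g" using gcd_mult_period[OF n, of d] unfolding N_def g_def by (simp add: mult.commute)
  have dd: "d = d' * g" unfolding d'_def g_def by simp
  have cop: "coprime d' N"
    unfolding d'_def N_def walk_period_def g_def using div_gcd_coprime[of n d] n by (simp add: coprime_commute)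
  have e2: "int ((r + k * d) mod n) = int ((r + k' * d) mod n)" using e rr unfolding walk_def by simp
  hence "(int r + int k * int d) mod int n = (int r + int k' * int d) mod int n"
    by (simp add: of_nat_mod)
  hence "int n dvd (int r + int k * int d) - (int r + int k' * int d)"
    by (simp add: mod_eq_dvd_iff)
  hence "int N * int g dvd (int k - int k') * int d' * int g"
    unfolding nN dd by (simp add: algebra_simps)
  hence "int N dvd (int k - int k') * int d'" using gpos by simp
  moreover have "coprime (int N) (int d')" using cop by (simp add: coprime_commute)
  ultimately have "int N dvd (int k - int k')" by (simp add: coprime_dvd_mult_left_iff)
  hence "int k mod int N = int k' mod int N" by (simp add: mod_eq_dvd_iff)
  hence "k mod N = k' mod N" by (metis of_nat_eq_iff of_nat_mod)
  thus ?thesis using rr unfolding N_def by simp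
qed

lemma walk_less: "n > 0 \<Longrightarrow> walk n d r k < n" unfolding walk_def by simp

lemma walk_add_period: "walk n d r (k + walk_period n d) = walk n d r k"
proof (cases "n = 0")
  case True thus ?thesis by (simp add: walk_def walk_period_def)
next
  case False
  have "walk_period n d * d = n * (d div gcd n d)"
    unfolding walk_period_def by (metis dvd_div_mult gcd_dvd1 gcd_dvd2 div_mult_swap mult.commute)
  hence eq: "r + (k + walk_period n d) * d = (r + k * d) + (d div gcd n d) * n" by (simp add: algebra_simps)
  show ?thesis unfolding walk_def eq by (rule mod_mult_self1)
qed

lemma walk_bij:
  assumes n: "n > 0"
  shows "bij_betw (\<lambda>(r,k). walk n d r k) ({..<gcd n d} \<times> {..<walk_period n d}) {..<n}"
proof -
  have inj: "inj_on (\<lambda>(r,k). walk n d r k) ({..<gcd n d} \<times> {..<walk_period n d})"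
  proof (rule inj_onI, clarify)
    fix r k r' k' assume a: "r < gcd n d" "k < walk_period n d" "r' < gcd n d" "k' < walk_period n d"
      and e: "walk n d r k = walk n d r' k'"
    from walk_eq_imp_same_coset[OF n a(1) a(3) e] a show "r = r' \<and> k = k'" by simp
  qed
  moreover have "(\<lambda>(r,k). walk n d r k) ` ({..<gcd n d} \<times> {..<walk_period n d}) = {..<n}"
  proof (rule card_subset_eq)
    show "(\<lambda>(r,k). walk n d r k) ` ({..<gcd n d} \<times> {..<walk_period n d}) \<subseteq> {..<n}"
      using walk_less[OF n] by auto
    show "card ((\<lambda>(r,k). walk n d r k) ` ({..<gcd n d} \<times> {..<walk_period n d})) = card {..<n}"
      using inj gcd_mult_period[OF n, of d] by (simp add: card_image card_cartesian_product)
  qed simp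
  ultimately show ?thesis unfolding bij_betw_def by simp
qed

lemma walk_surj:
  assumes n: "n > 0" and a: "a < n"
  shows "\<exists>k < walk_period n d. walk n d (a mod gcd n d) k = a"
proof -
  have "a \<in> (\<lambda>(r,k). walk n d r k) ` ({..<gcd n d} \<times> {..<walk_period n d})"
    using walk_bij[OF n, of d] a by (simp add: bij_betw_def)
  then obtain r k where rk: "r < gcd n d" "k < walk_period n d" "walk n d r k = a" by auto
  have "a mod gcd n d = r" using walk_mod_gcd[OF n rk(1), of k] rk(3) by simp
  then show ?thesis using rk by auto
qed

lemma sum_card_cosets:
  assumes n: "n > 0" and X: "X \<subseteq> {..<n}"
  shows "(\<Sum>r<gcd n d. card {k. k < walk_period n d \<and> walk n d r k \<in> X}) = card X"
proof -
  define P where "P = {..<gcd n d} \<times> {..<walk_period n d}"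
  define S where "S = {p \<in> P. (\<lambda>(r,k). walk n d r k) p \<in> X}"
  have bij: "bij_betw (\<lambda>(r,k). walk n d r k) P {..<n}" unfolding P_def by (rule walk_bij[OF n])
  have "S = Sigma {..<gcd n d} (\<lambda>r. {k. k < walk_period n d \<and> walk n d r k \<in> X})"
    unfolding S_def P_def by auto
  then have "card S = (\<Sum>r<gcd n d. card {k. k < walk_period n d \<and> walk n d r k \<in> X})"
    by (simp add: card_SigmaI)
  moreover have "card S = card X"
  proof -
    have inj: "inj_on (\<lambda>(r,k). walk n d r k) S"
      using bij inj_on_subset unfolding bij_betw_def S_def by fastforce
    have "X \<subseteq> (\<lambda>(r,k). walk n d r k) ` S"
    proof
      fix x assume x: "x \<in> X"
      then obtain p where "p \<in> P" "x = (\<lambda>(r,k). walk n d r k) p"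
        using bij X unfolding bij_betw_def by (metis lessThan_iff subsetD imageE)
      then show "x \<in> (\<lambda>(r,k). walk n d r k) ` S" unfolding S_def using x by blast
    qed
    then have "(\<lambda>(r,k). walk n d r k) ` S = X" unfolding S_def by auto
    then show ?thesis using card_image[OF inj] by simp
  qed
  ultimately show ?thesis by simp
qed

lemma card_two_periods:
  shows "card {k. k < 2 * walk_period n d \<and> walk n d r k \<in> X} = 2 * card {k. k < walk_period n d \<and> walk n d r k \<in> X}"
proof -
  define A where "A = {k. k < walk_period n d \<and> walk n d r k \<in> X}"
  have "{k. k < 2 * walk_period n d \<and> walk n d r k \<in> X} = A \<union> (\<lambda>k. k + walk_period n d) ` A"
  proof (rule set_eqI, rule iffI)
    fix k assume k: "k \<in> {k. k < 2 * walk_period n d \<and> walk n d r k \<in> X}"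
    show "k \<in> A \<union> (\<lambda>k. k + walk_period n d) ` A"
    proof (cases "k < walk_period n d")
      case True thus ?thesis using k unfolding A_def by auto
    next
      case False
      then obtain i where i: "k = i + walk_period n d" using le_Suc_ex not_less add.commute by metis
      then have "i \<in> A" using k walk_add_period[of n d r i] unfolding A_def by auto
      then show ?thesis using i by blast
    qed
  next
    fix k assume "k \<in> A \<union> (\<lambda>k. k + walk_period n d) ` A"
    thus "k \<in> {k. k < 2 * walk_period n d \<and> walk n d r k \<in> X}" unfolding A_def using walk_add_period[of n d r] by auto
  qed
  moreover have "card (A \<union> (\<lambda>k. k + walk_period n d) ` A) = card A + card ((\<lambda>k. k + walk_period n d) ` A)"
    by (rule card_Un_disjoint) (auto simp: A_def)
  moreover have "card ((\<lambda>k. k + walk_period n d) ` A) = card A" by (rule card_image) (simp add: inj_on_def)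
  ultimately show ?thesis unfolding A_def by simp
qed

lemma nat_eq_if_mod_eq_and_close:
  fixes k k' N :: nat
  assumes "k mod N = k' mod N" "k < k' + N" "k' < k + N"
  shows "k = k'"
proof -
  have "N dvd (max k k' - min k k')"
    using assms(1) mod_eq_dvd_iff_nat[of "min k k'" "max k k'" N] by (cases "k \<le> k'") (auto simp: max_def min_def)
  moreover have "max k k' - min k k' < N" using assms(2,3) by linarith
  ultimately have "max k k' - min k k' = 0"
    by (metis nat_dvd_not_less neq0_conv)
  then show ?thesis by linarith
qed

lemma walk_inj_on_window:
  assumes n: "n > 0" and r: "r < gcd n d" and l: "l \<le> walk_period n d"
  shows "inj_on (walk n d r) {k0..<k0+l}"
proof (rule inj_onI)
  fix k k' assume k: "k \<in> {k0..<k0+l}" "k' \<in> {k0..<k0+l}" and e: "walk n d r k = walk n d r k'"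
  have "k mod walk_period n d = k' mod walk_period n d"
    using walk_eq_imp_same_coset[OF n r r e] by simp
  then show "k = k'" by (rule nat_eq_if_mod_eq_and_close) (use k l in auto)
qed

lemma arith_prog_eq_walk_image:
  assumes n: "n > 0" and a: "a < n"
  shows "\<exists>k0<walk_period n d. arith_prog n a d l = walk n d (a mod gcd n d) ` {k0..<k0+l}"
proof -
  define r where "r = a mod gcd n d"
  obtain k0 where k0: "k0 < walk_period n d" "walk n d r k0 = a"
    using walk_surj[OF n a, of d] unfolding r_def by blast
  have "(a + k * d) mod n = walk n d r (k0 + k)" for k
  proof -
    have "(a + k * d) mod n = ((r + k0 * d) mod n + k * d) mod n" using k0(2) unfolding walk_def by simp
    also have "\<dots> = (r + k0 * d + k * d) mod n" by (rule mod_add_left_eq)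
    also have "\<dots> = walk n d r (k0 + k)" unfolding walk_def by (simp add: algebra_simps)
    finally show ?thesis .
  qed
  then have "arith_prog n a d l = walk n d r ` ((\<lambda>k. k0 + k) ` {..<l})"
    unfolding arith_prog_def by (auto simp: image_image)
  also have "(\<lambda>k. k0 + k) ` {..<l} = {k0..<k0+l}"
    by (simp add: lessThan_atLeast0 image_add_atLeastLessThan add.commute)
  finally show ?thesis using k0(1) unfolding r_def by blast
qed

definition walk_rank :: "nat \<Rightarrow> nat set \<Rightarrow> nat \<Rightarrow> nat \<Rightarrow> nat \<Rightarrow> nat" where
  "walk_rank n X d r k = card {k'. k' < k \<and> walk n d r k' \<in> X}"

abbreviation walk_visits :: "nat \<Rightarrow> nat set \<Rightarrow> nat \<Rightarrow> nat \<Rightarrow> nat" where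
  "walk_visits n X d r \<equiv> walk_rank n X d r (2 * walk_period n d)"

definition prefix_sum :: "nat \<Rightarrow> nat set \<Rightarrow> nat \<Rightarrow> nat \<Rightarrow> (nat \<Rightarrow> int) \<Rightarrow> nat \<Rightarrow> int" where
  "prefix_sum n X d r col u = (\<Sum>k\<in>{k. k < 2 * walk_period n d \<and> walk n d r k \<in> X \<and> walk_rank n X d r k < u}. col (walk n d r k))"

text \<open>The steps within two periods of the walk whose rank lies in \<open>dyadic_block q j\<close>; taking two
  periods makes every progression with difference \<open>d\<close> a window of consecutive steps.\<close>

definition rank_block :: "nat \<Rightarrow> nat set \<Rightarrow> nat \<Rightarrow> nat \<Rightarrow> nat \<Rightarrow> nat \<Rightarrow> nat set" where
  "rank_block n X d r j q =
     {k. k < 2 * walk_period n d \<and> walk n d r k \<in> X \<and> walk_rank n X d r k \<in> dyadic_block q j}"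

definition block_sum :: "nat \<Rightarrow> nat set \<Rightarrow> nat \<Rightarrow> nat \<Rightarrow> (nat \<Rightarrow> int) \<Rightarrow> nat \<Rightarrow> nat \<Rightarrow> int" where
  "block_sum n X d r col j q = (\<Sum>k\<in>rank_block n X d r j q. col (walk n d r k))"

lemma walk_rank_mono: "k \<le> k' \<Longrightarrow> walk_rank n X d r k \<le> walk_rank n X d r k'"
  unfolding walk_rank_def by (intro card_mono) auto

lemma walk_rank_strict_mono:
  assumes "k < k'" "walk n d r k \<in> X"
  shows "walk_rank n X d r k < walk_rank n X d r k'"
  unfolding walk_rank_def
proof (rule psubset_card_mono)
  show "finite {k''. k'' < k' \<and> walk n d r k'' \<in> X}" by simp
  show "{k''. k'' < k \<and> walk n d r k'' \<in> X} \<subset> {k''. k'' < k' \<and> walk n d r k'' \<in> X}"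
    using assms by auto
qed

lemma walk_rank_less_iff:
  assumes "walk n d r k \<in> X"
  shows "walk_rank n X d r k < walk_rank n X d r K \<longleftrightarrow> k < K"
  using walk_rank_strict_mono[OF _ assms, of K] walk_rank_mono[of K k n X d r] by (cases "k < K") auto

lemma walk_rank_inj:
  assumes "walk n d r k \<in> X" "walk n d r k' \<in> X" "walk_rank n X d r k = walk_rank n X d r k'"
  shows "k = k'"
  using walk_rank_strict_mono[of k k' n d r X] walk_rank_strict_mono[of k' k n d r X] assms by (cases k k' rule: linorder_cases) auto

lemma sum_ranks:
  fixes col :: "nat \<Rightarrow> int" and S :: "nat set"
  assumes S: "finite S"
  shows "(\<Sum>\<rho>\<in>S. \<Sum>k\<in>{k. k < 2 * walk_period n d \<and> walk n d r k \<in> X \<and> walk_rank n X d r k = \<rho>}. col (walk n d r k))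
       = (\<Sum>k\<in>{k. k < 2 * walk_period n d \<and> walk n d r k \<in> X \<and> walk_rank n X d r k \<in> S}. col (walk n d r k))"
proof -
  define KK where "KK = {k. k < 2 * walk_period n d \<and> walk n d r k \<in> X \<and> walk_rank n X d r k \<in> S}"
  have "(\<Sum>\<rho>\<in>S. \<Sum>k\<in>{k. k \<in> KK \<and> walk_rank n X d r k = \<rho>}. col (walk n d r k)) = (\<Sum>k\<in>KK. col (walk n d r k))"
    using S by (intro sum.group) (auto simp: KK_def)
  moreover have "{k. k \<in> KK \<and> walk_rank n X d r k = \<rho>} = {k. k < 2 * walk_period n d \<and> walk n d r k \<in> X \<and> walk_rank n X d r k = \<rho>}"
    if "\<rho> \<in> S" for \<rho> using that unfolding KK_def by auto
  ultimately show ?thesis unfolding KK_def by (metis (no_types, lifting) sum.cong)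
qed

lemma prefix_sum_blocks:
  fixes col :: "nat \<Rightarrow> int"
  assumes u: "u < 2^J"
  shows "prefix_sum n X d r col u
           = (\<Sum>j<J. if odd (u div 2^j) then block_sum n X d r col j (u div 2^(j+1)) else 0)"
proof -
  define fr where "fr \<rho> = (\<Sum>k\<in>{k. k < 2 * walk_period n d \<and> walk n d r k \<in> X \<and> walk_rank n X d r k = \<rho>}.
      col (walk n d r k))" for \<rho>
  have block: "(\<Sum>\<rho>\<in>dyadic_block q j. fr \<rho>) = block_sum n X d r col j q" for q j
    unfolding fr_def block_sum_def rank_block_def by (subst sum_ranks) (auto simp: dyadic_block_def)
  have "prefix_sum n X d r col u = (\<Sum>\<rho><u. fr \<rho>)"
    unfolding prefix_sum_def fr_def by (subst sum_ranks) auto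
  also have "\<dots> = (\<Sum>j<J. if odd (u div 2^j) then (\<Sum>\<rho>\<in>dyadic_block (u div 2^(j+1)) j. fr \<rho>) else 0)"
    using u by (rule sum_lessThan_dyadic_blocks)
  finally show ?thesis unfolding block .
qed

lemma window_sum_eq_prefix_diff:
  fixes col :: "nat \<Rightarrow> int"
  assumes K: "K0 \<le> K1" "K1 \<le> 2 * walk_period n d"
  shows "(\<Sum>k\<in>{k. K0 \<le> k \<and> k < K1 \<and> walk n d r k \<in> X}. col (walk n d r k))
       = prefix_sum n X d r col (walk_rank n X d r K1) - prefix_sum n X d r col (walk_rank n X d r K0)"
proof -
  have e: "{k. k < 2 * walk_period n d \<and> walk n d r k \<in> X \<and> walk_rank n X d r k < walk_rank n X d r K} = {k. k < K \<and> walk n d r k \<in> X}"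
    if "K \<le> 2 * walk_period n d" for K using that walk_rank_less_iff[of n d r _ X K] by auto
  have "{k. k < K1 \<and> walk n d r k \<in> X} = {k. k < K0 \<and> walk n d r k \<in> X} \<union> {k. K0 \<le> k \<and> k < K1 \<and> walk n d r k \<in> X}"
    using K by auto
  moreover have "(\<Sum>k\<in>{k. k < K0 \<and> walk n d r k \<in> X} \<union> {k. K0 \<le> k \<and> k < K1 \<and> walk n d r k \<in> X}. col (walk n d r k))
      = (\<Sum>k\<in>{k. k < K0 \<and> walk n d r k \<in> X}. col (walk n d r k)) + (\<Sum>k\<in>{k. K0 \<le> k \<and> k < K1 \<and> walk n d r k \<in> X}. col (walk n d r k))"
  proof (rule sum.union_disjoint)
    show "finite {k. k < K0 \<and> walk n d r k \<in> X}" by (rule finite_subset[of _ "{..<K0}"]) auto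
    show "finite {k. K0 \<le> k \<and> k < K1 \<and> walk n d r k \<in> X}" by (rule finite_subset[of _ "{..<K1}"]) auto
  qed auto
  ultimately have "(\<Sum>k\<in>{k. k < K1 \<and> walk n d r k \<in> X}. col (walk n d r k))
      = (\<Sum>k\<in>{k. k < K0 \<and> walk n d r k \<in> X}. col (walk n d r k)) + (\<Sum>k\<in>{k. K0 \<le> k \<and> k < K1 \<and> walk n d r k \<in> X}. col (walk n d r k))"
    by simp
  thus ?thesis unfolding prefix_sum_def using e K by simp
qed

lemma arith_prog_sum_eq_prefix_diff:
  fixes col :: "nat \<Rightarrow> int"
  assumes n: "n > 0" and a: "a < n" and l: "l * gcd n d \<le> n"
  shows "\<exists>r<gcd n d. \<exists>K0 K1. K0 \<le> K1 \<and> K1 \<le> 2 * walk_period n d \<and>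
           (\<Sum>x\<in>arith_prog n a d l \<inter> X. col x)
             = prefix_sum n X d r col (walk_rank n X d r K1) - prefix_sum n X d r col (walk_rank n X d r K0)"
proof -
  define r where "r = a mod gcd n d"
  have r: "r < gcd n d" unfolding r_def using n by simp
  obtain k0 where k0: "k0 < walk_period n d" and A: "arith_prog n a d l = walk n d r ` {k0..<k0+l}"
    using arith_prog_eq_walk_image[OF n a] unfolding r_def by blast
  have "l * gcd n d \<le> walk_period n d * gcd n d" using l gcd_mult_period[OF n, of d] by (simp add: mult.commute)
  then have lN: "l \<le> walk_period n d" using n by simp
  have "(\<Sum>x\<in>arith_prog n a d l \<inter> X. col x) = (\<Sum>x\<in>walk n d r ` {k\<in>{k0..<k0+l}. walk n d r k \<in> X}. col x)"
    unfolding A by (intro sum.cong) auto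
  also have "\<dots> = (\<Sum>k\<in>{k. k0 \<le> k \<and> k < k0 + l \<and> walk n d r k \<in> X}. col (walk n d r k))"
  proof -
    have "inj_on (walk n d r) {k\<in>{k0..<k0+l}. walk n d r k \<in> X}"
      using walk_inj_on_window[OF n r lN] by (rule inj_on_subset) auto
    then show ?thesis by (subst sum.reindex) (auto intro!: sum.cong)
  qed
  also have "\<dots> = prefix_sum n X d r col (walk_rank n X d r (k0+l)) - prefix_sum n X d r col (walk_rank n X d r k0)"
    using k0 lN by (intro window_sum_eq_prefix_diff) auto
  finally show ?thesis using r k0 lN by (intro exI[of _ r] conjI exI[of _ k0] exI[of _ "k0+l"]) auto
qed

definition block_weight :: "nat \<Rightarrow> nat set \<Rightarrow> nat \<Rightarrow> nat \<Rightarrow> nat \<Rightarrow> nat \<Rightarrow> nat \<Rightarrow> real" where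
  "block_weight n X d r j q x = real (card {k \<in> rank_block n X d r j q. walk n d r k = x})"

lemma finite_rank_block: "finite (rank_block n X d r j q)"
  unfolding rank_block_def by (rule finite_subset[of _ "{..<2 * walk_period n d}"]) auto

lemma block_sum_eq_weighted_sum:
  fixes col :: "nat \<Rightarrow> int"
  assumes X: "finite X"
  shows "real_of_int (block_sum n X d r col j q) = (\<Sum>x\<in>X. block_weight n X d r j q x * real_of_int (col x))"
proof -
  have "block_sum n X d r col j q = (\<Sum>x\<in>X. \<Sum>k\<in>{k. k \<in> rank_block n X d r j q \<and> walk n d r k = x}. col (walk n d r k))"
    unfolding block_sum_def using X finite_rank_block by (intro sum.group[symmetric]) (auto simp: rank_block_def)
  also have "\<dots> = (\<Sum>x\<in>X. int (card {k \<in> rank_block n X d r j q. walk n d r k = x}) * col x)"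
    by (intro sum.cong refl) auto
  finally show ?thesis unfolding block_weight_def by simp
qed

lemma block_weight_le_2:
  assumes n: "n > 0" and r: "r < gcd n d"
  shows "block_weight n X d r j q x \<le> 2"
proof -
  define S where "S = {k \<in> rank_block n X d r j q. walk n d r k = x}"
  have "inj_on (\<lambda>k. k div walk_period n d) S"
  proof (rule inj_onI)
    fix k k' assume k: "k \<in> S" "k' \<in> S" and e: "k div walk_period n d = k' div walk_period n d"
    have "walk n d r k = walk n d r k'" using k unfolding S_def by auto
    hence "k mod walk_period n d = k' mod walk_period n d" using walk_eq_imp_same_coset[OF n r r] by blast
    thus "k = k'" using e by (metis div_mult_mod_eq)
  qed
  hence "card S = card ((\<lambda>k. k div walk_period n d) ` S)" by (simp add: card_image)
  also have "\<dots> \<le> card {0::nat, 1}"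
  proof (rule card_mono)
    show "(\<lambda>k. k div walk_period n d) ` S \<subseteq> {0, 1}"
    proof
      fix z assume "z \<in> (\<lambda>k. k div walk_period n d) ` S"
      then obtain k where "k \<in> S" "z = k div walk_period n d" by auto
      hence "k < 2 * walk_period n d" "z = k div walk_period n d" unfolding S_def rank_block_def by auto
      hence "z < 2" using walk_period_pos[OF n, of d] by (simp add: div_less_iff_less_mult)
      thus "z \<in> {0,1}" by auto
    qed
  qed auto
  finally show ?thesis unfolding block_weight_def S_def by simp
qed

lemma card_rank_block_le: "card (rank_block n X d r j q) \<le> 2^j"
proof -
  have "inj_on (walk_rank n X d r) (rank_block n X d r j q)"
    by (rule inj_onI) (auto simp: rank_block_def intro: walk_rank_inj)
  hence "card (rank_block n X d r j q) = card (walk_rank n X d r ` rank_block n X d r j q)" by (simp add: card_image)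
  also have "\<dots> \<le> card (dyadic_block q j)"
    by (rule card_mono) (auto simp: rank_block_def dyadic_block_def)
  finally show ?thesis by (simp add: dyadic_block_def)
qed

lemma sum_block_weight_le:
  assumes X: "finite X"
  shows "(\<Sum>x\<in>X. block_weight n X d r j q x) \<le> 2^j"
proof -
  have "(\<Sum>x\<in>X. card {k \<in> rank_block n X d r j q. walk n d r k = x}) = (\<Sum>x\<in>X. \<Sum>k\<in>{k. k \<in> rank_block n X d r j q \<and> walk n d r k = x}. (1::nat))"
    by simp
  also have "\<dots> = (\<Sum>k\<in>rank_block n X d r j q. 1)"
    using X finite_rank_block by (intro sum.group) (auto simp: rank_block_def)
  also have "\<dots> = card (rank_block n X d r j q)" by simp
  finally have "(\<Sum>x\<in>X. card {k \<in> rank_block n X d r j q. walk n d r k = x}) \<le> 2^j" using card_rank_block_le by simp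
  hence "real (\<Sum>x\<in>X. card {k \<in> rank_block n X d r j q. walk n d r k = x}) \<le> 2^j"
    by (metis of_nat_le_iff of_nat_numeral of_nat_power)
  thus ?thesis unfolding block_weight_def by simp
qed

lemma sum_block_weight_sq_le:
  assumes n: "n > 0" and r: "r < gcd n d" and X: "finite X"
  shows "(\<Sum>x\<in>X. (block_weight n X d r j q x)^2) \<le> 2 * 2^j"
proof -
  have "(\<Sum>x\<in>X. (block_weight n X d r j q x)^2) \<le> (\<Sum>x\<in>X. 2 * block_weight n X d r j q x)"
  proof (rule sum_mono)
    fix x
    have "0 \<le> block_weight n X d r j q x" unfolding block_weight_def by simp
    thus "(block_weight n X d r j q x)^2 \<le> 2 * block_weight n X d r j q x"
      using block_weight_le_2[OF n r, of X j q x] by (simp add: power2_eq_square mult_right_mono)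
  qed
  also have "\<dots> = 2 * (\<Sum>x\<in>X. block_weight n X d r j q x)" by (simp add: sum_distrib_left)
  also have "\<dots> \<le> 2 * 2^j" using sum_block_weight_le[OF X] by simp
  finally show ?thesis .
qed

lemma card_dyadic_blocks_below_le:
  "real (card {q::nat. q * 2^(j+1) + 2^j \<le> R}) \<le> real R / 2^j"
proof -
  have "{q::nat. q * 2^(j+1) + 2^j \<le> R} \<subseteq> {..< R div 2^j}"
  proof
    fix q assume "q \<in> {q::nat. q * 2^(j+1) + 2^j \<le> R}"
    hence "(q+1) * 2^j \<le> R" by (simp add: algebra_simps)
    hence "q + 1 \<le> R div 2^j" using less_eq_div_iff_mult_less_eq[of "2^j" "q+1" R] by simp
    thus "q \<in> {..< R div 2^j}" by simp
  qed
  hence "card {q::nat. q * 2^(j+1) + 2^j \<le> R} \<le> R div 2^j"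
    by (metis card_lessThan card_mono finite_lessThan)
  hence "real (card {q::nat. q * 2^(j+1) + 2^j \<le> R}) \<le> real (R div 2^j)" by simp
  also have "\<dots> \<le> real R / 2^j"
  proof -
    have "(R div 2^j) * 2^j \<le> R" by (rule div_times_less_eq_dividend)
    hence "real (R div 2^j) * 2^j \<le> real R" by (metis of_nat_le_iff of_nat_mult of_nat_numeral of_nat_power)
    thus ?thesis by (simp add: field_simps)
  qed
  finally show ?thesis .
qed

lemma sum_walk_visits:
  assumes n: "n > 0" and X: "X \<subseteq> {..<n}"
  shows "(\<Sum>r<gcd n d. walk_visits n X d r) = 2 * card X"
proof -
  have "(\<Sum>r<gcd n d. walk_rank n X d r (2 * walk_period n d)) = (\<Sum>r<gcd n d. 2 * card {k. k < walk_period n d \<and> walk n d r k \<in> X})"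
    unfolding walk_rank_def using card_two_periods by simp
  also have "\<dots> = 2 * (\<Sum>r<gcd n d. card {k. k < walk_period n d \<and> walk n d r k \<in> X})"
    by (simp add: sum_distrib_left)
  also have "\<dots> = 2 * card X" using sum_card_cosets[OF n X, of d] by simp
  finally show ?thesis .
qed

text \<open>The threshold for a block of \<open>2^j\<close> visits, with \<open>L = ln (n/m)\<close> and \<open>2^J\<close> of order \<open>m\<close>:
  since the block's weights have square sum at most \<open>2 * 2^j\<close>, its entropy cost is
  \<open>exp (-(L + 20 + (J - 1 - j)))\<close>, small enough to pay for the \<open>O(n m / 2^j)\<close> blocks of that size.\<close>

definition block_threshold :: "real \<Rightarrow> nat \<Rightarrow> nat \<Rightarrow> real" where
  "block_threshold L J j = 2 * sqrt (L + 20 + real (J - Suc j)) * sqrt (2 * 2^j)"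

lemma block_threshold_pos: "L \<ge> 0 \<Longrightarrow> block_threshold L J j > 0"
  by (simp add: block_threshold_def)

lemma block_threshold_squared:
  "L \<ge> 0 \<Longrightarrow> (block_threshold L J j)^2 = 4 * (L + 20 + real (J - Suc j)) * (2 * 2^j)"
  by (simp add: block_threshold_def power_mult_distrib)

lemma threshold_term_le:
  fixes m Lg :: real and J i :: nat
  assumes m: "m > 0" and L: "Lg \<ge> 0" and J: "2^J \<le> 4 * m" and i: "i < J"
  shows "2 * sqrt (Lg + 20 + real i) * sqrt (2 * 2^(J - Suc i)) \<le> 18 * sqrt m * sqrt (1 + Lg) * 0.8^i"
proof -
  have pw: "(2::real) * 2^(J - Suc i) = 2^J / 2^i"
  proof -
    have "J = (J - Suc i) + Suc i" using i by simp
    hence "(2::real)^J = 2^(J - Suc i) * 2^(Suc i)" by (metis power_add)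
    thus ?thesis by (simp add: field_simps)
  qed
  have a1: "Lg + 20 + real i \<le> (1 + Lg) * (20 + real i)"
    using L by (simp add: algebra_simps)
  have bern: "1 + real i * 0.28 \<le> (1 + 0.28::real)^i"
    by (rule Bernoulli_inequality) simp
  have a2: "20 + real i \<le> 20 * 0.64^i * 2^i"
  proof -
    have "(0.64::real)^i * 2^i = 1.28^i" by (simp flip: power_mult_distrib)
    thus ?thesis using bern by simp
  qed
  have "4 * (Lg + 20 + real i) * (2^J / 2^i) \<le> 4 * ((1 + Lg) * (20 + real i)) * (4 * m / 2^i)"
    using a1 J L by (intro mult_mono divide_right_mono) auto
  also have "\<dots> = 16 * m * (1 + Lg) * ((20 + real i) / 2^i)" by (simp add: field_simps)
  also have "\<dots> \<le> 16 * m * (1 + Lg) * (20 * 0.64^i)"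
    using a2 m L by (intro mult_left_mono) (auto simp: field_simps)
  also have "\<dots> \<le> 324 * m * (1 + Lg) * 0.64^i" using m L by (simp add: mult_right_mono)
  finally have sq: "4 * (Lg + 20 + real i) * (2^J / 2^i) \<le> 324 * m * (1 + Lg) * 0.64^i" .
  have "2 * sqrt (Lg + 20 + real i) * sqrt (2 * 2^(J - Suc i)) = sqrt (4 * (Lg + 20 + real i) * (2^J / 2^i))"
  proof -
    have s4: "sqrt (4::real) = 2" by (simp add: real_sqrt_eq_iff)
    show ?thesis unfolding pw real_sqrt_mult s4 ..
  qed
  also have "\<dots> \<le> sqrt (324 * m * (1 + Lg) * 0.64^i)" using sq by simp
  also have "\<dots> = 18 * sqrt m * sqrt (1 + Lg) * 0.8^i"
  proof -
    have "sqrt (0.64::real) = 0.8" by (rule real_sqrt_unique) (simp_all add: power2_eq_square)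
    hence "sqrt ((0.64::real)^i) = 0.8^i" by (simp only: real_sqrt_power)
    moreover have "sqrt (324::real) = 18" by (simp add: real_sqrt_eq_iff)
    ultimately show ?thesis by (simp add: real_sqrt_mult)
  qed
  finally show ?thesis .
qed

lemma sum_block_threshold_le:
  fixes m Lg :: real and J :: nat
  assumes m: "m > 0" and L: "Lg \<ge> 0" and J: "2^J \<le> 4 * m"
  shows "(\<Sum>j<J. block_threshold Lg J j) \<le> 90 * sqrt m * sqrt (1 + Lg)"
  unfolding block_threshold_def
proof -
  have "(\<Sum>j<J. 2 * sqrt (Lg + 20 + real (J - Suc j)) * sqrt (2 * 2^j))
      = (\<Sum>i<J. 2 * sqrt (Lg + 20 + real (J - Suc (J - Suc i))) * sqrt (2 * 2^(J - Suc i)))"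
    by (rule sum.nat_diff_reindex[symmetric])
  also have "\<dots> = (\<Sum>i<J. 2 * sqrt (Lg + 20 + real i) * sqrt (2 * 2^(J - Suc i)))"
    by (intro sum.cong refl) (simp add: Suc_diff_Suc)
  also have "\<dots> \<le> (\<Sum>i<J. 18 * sqrt m * sqrt (1 + Lg) * 0.8^i)"
    using threshold_term_le[OF m L J] by (intro sum_mono) auto
  also have "\<dots> = 18 * sqrt m * sqrt (1 + Lg) * (\<Sum>i<J. 0.8^i)" by (simp add: sum_distrib_left)
  also have "(\<Sum>i<J. (0.8::real)^i) \<le> 5"
  proof -
    have "(\<Sum>i<J. (0.8::real)^i) = (1 - 0.8^J) / (1 - 0.8)" by (simp add: sum_gp_strict)
    also have "\<dots> \<le> 5" by simp
    finally show ?thesis .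
  qed
  hence "18 * sqrt m * sqrt (1 + Lg) * (\<Sum>i<J. 0.8^i) \<le> 18 * sqrt m * sqrt (1 + Lg) * 5"
    using m L by (intro mult_left_mono) auto
  finally show "(\<Sum>j<J. 2 * sqrt (Lg + 20 + real (J - Suc j)) * sqrt (2 * 2^j)) \<le> 90 * sqrt m * sqrt (1 + Lg)"
    by simp
qed

lemma sum_two_over_e_power_le:
  fixes J :: nat
  shows "(\<Sum>j<J. (2 / exp 1)^(J - Suc j)) \<le> (9::real)"
proof -
  have "(\<Sum>j<J. (2 / exp 1)^(J - Suc j)) = (\<Sum>i<J. (2 / exp 1)^(J - Suc (J - Suc i)))"
    by (rule sum.nat_diff_reindex[symmetric])
  also have "\<dots> = (\<Sum>i<J. (2 / exp (1::real))^i)"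
    by (intro sum.cong refl) (simp add: Suc_diff_Suc)
  also have "\<dots> \<le> (\<Sum>i<J. (8/9::real)^i)"
  proof (intro sum_mono power_mono)
    have "1 + 1/2 \<le> exp (1/2::real)" using exp_ge_add_one_self[of "1/2"] by simp
    hence "(3/2)^2 \<le> (exp (1/2::real))^2" by (intro power_mono) auto
    also have "(exp (1/2::real))^2 = exp 1" by (simp flip: exp_of_nat_mult)
    finally have "9/4 \<le> exp (1::real)" by (simp add: power2_eq_square)
    thus "2 / exp 1 \<le> (8/9::real)" by (simp add: field_simps)
  qed auto
  also have "\<dots> = (1 - (8/9)^J) / (1 - 8/9)" by (simp add: sum_gp_strict)
  also have "\<dots> \<le> 9" by simp
  finally show ?thesis .
qed

lemma dyadic_cost_le:
  fixes m n J j :: nat and L :: real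
  assumes m: "m > 0" "m \<le> n" and J: "2 * m < 2^J" and j: "j < J" and L: "L = ln (real n / real m)"
  shows "(2 * real m / 2^j) * exp (-(L + 20 + real (J - Suc j)))
           \<le> (2 * real m / real n) * exp (-20) * (2 / exp 1)^(J - Suc j)"
proof -
  have exp_L: "exp (-L) = real m / real n" unfolding L using m by (simp add: exp_minus)
  define i where "i = J - Suc j"
  have "J = Suc (j + i)" using j unfolding i_def by simp
  then have "m \<le> 2^j * 2^i" using J by (simp add: power_add)
  then have "real m \<le> real (2^j * 2^i)" by (simp only: of_nat_le_iff)
  then have "real m \<le> 2^j * 2^i" by simp
  then have "real m / 2^j \<le> 2^i" by (simp add: pos_divide_le_eq mult.commute)
  then have "(2 * real m / real n) * exp (-20) * exp (- real i) * (real m / 2^j)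
      \<le> (2 * real m / real n) * exp (-20) * exp (- real i) * 2^i"
    by (rule mult_left_mono) simp
  moreover have "(2 * real m / 2^j) * exp (-(L + 20 + real i))
      = (2 * real m / real n) * exp (-20) * exp (- real i) * (real m / 2^j)"
  proof -
    have "exp (-(L + 20 + real i)) = exp (-L) * exp (-20) * exp (- real i)" by (simp flip: exp_add)
    then show ?thesis unfolding exp_L by (simp add: field_simps)
  qed
  moreover have "exp (- real i) * 2^i = (2 / exp 1 :: real)^i"
  proof -
    have "exp (- real i) = exp (-1) ^ i" using exp_of_nat_mult[of i "-1"] by simp
    moreover have "exp (-1) * 2 = 2 / exp (1::real)" by (simp add: exp_minus divide_inverse)
    ultimately show ?thesis by (simp flip: power_mult_distrib)
  qed
  ultimately show ?thesis unfolding i_def[symmetric] by (simp add: mult.assoc)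
qed

lemma sum_dyadic_costs_le:
  fixes m n J :: nat and L :: real
  assumes m: "m > 0" "m \<le> n" and J: "2 * m < 2^J" and L: "L = ln (real n / real m)"
  shows "real n * (\<Sum>j<J. (2 * real m / 2^j) * exp (-(L + 20 + real (J - Suc j)))) \<le> real m / 10"
proof -
  have n: "real n > 0" using m by simp
  have "real n * (\<Sum>j<J. (2 * real m / 2^j) * exp (-(L + 20 + real (J - Suc j))))
      \<le> real n * (\<Sum>j<J. (2 * real m / real n) * exp (-20) * (2 / exp 1)^(J - Suc j))"
    using dyadic_cost_le[OF m J _ L] n by (intro mult_left_mono sum_mono) auto
  also have "\<dots> = real n * ((2 * real m / real n) * exp (-20) * (\<Sum>j<J. (2 / exp 1)^(J - Suc j)))"
    by (simp only: sum_distrib_left)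
  also have "\<dots> = 2 * real m * exp (-20) * (\<Sum>j<J. (2 / exp 1)^(J - Suc j))"
    using n by simp
  also have "\<dots> \<le> 2 * real m * exp (-20) * 9"
    by (intro mult_left_mono sum_two_over_e_power_le) auto
  also have "\<dots> \<le> real m / 10"
  proof -
    have "6 \<le> exp (5::real)" using exp_ge_add_one_self[of 5] by simp
    then have "6^4 \<le> exp (5::real) ^ 4" by (intro power_mono) auto
    also have "exp (5::real) ^ 4 = exp 20" by (simp flip: exp_of_nat_mult)
    finally have "exp (-20::real) \<le> 1/1296" by (simp add: exp_minus field_simps)
    then have "2 * real m * exp (-20) * 9 \<le> 2 * real m * (1/1296) * 9"
      by (intro mult_right_mono mult_left_mono) auto
    then show ?thesis by simp
  qed
  finally show ?thesis .
qed

lemma sum_coset_block_costs_le: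
  fixes n J :: nat and X :: "nat set" and c :: "nat \<Rightarrow> real"
  assumes n: "n > 0" and X: "X \<subseteq> {..<n}" and c: "\<And>j. c j \<ge> 0"
  shows "(\<Sum>r<gcd n d. \<Sum>j<J. real (card {q. q * 2^(j+1) + 2^j \<le> walk_visits n X d r}) * c j)
           \<le> (\<Sum>j<J. (2 * real (card X) / 2^j) * c j)"
proof -
  have "(\<Sum>r<gcd n d. \<Sum>j<J. real (card {q. q * 2^(j+1) + 2^j \<le> walk_visits n X d r}) * c j)
      \<le> (\<Sum>r<gcd n d. \<Sum>j<J. (real (walk_visits n X d r) / 2^j) * c j)"
    by (intro sum_mono mult_right_mono card_dyadic_blocks_below_le c)
  also have "\<dots> = (\<Sum>j<J. (real (\<Sum>r<gcd n d. walk_visits n X d r) / 2^j) * c j)"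
    by (subst sum.swap) (simp add: sum_divide_distrib sum_distrib_right)
  also have "\<dots> = (\<Sum>j<J. (2 * real (card X) / 2^j) * c j)"
    using sum_walk_visits[OF n X] by simp
  finally show ?thesis .
qed

definition block_indices :: "nat \<Rightarrow> nat set \<Rightarrow> nat \<Rightarrow> (nat \<times> nat \<times> nat \<times> nat) set" where
  "block_indices n X J = (SIGMA d:{..<n}. SIGMA r:{..<gcd n d}. SIGMA j:{..<J}.
     {q. q * 2^(j+1) + 2^j \<le> walk_visits n X d r})"

lemma finite_dyadic_blocks_below: "finite {q::nat. q * 2^(j+1) + 2^j \<le> R}"
proof (rule finite_subset[of _ "{..R}"])
  show "{q::nat. q * 2^(j+1) + 2^j \<le> R} \<subseteq> {..R}"
  proof
    fix q assume "q \<in> {q::nat. q * 2^(j+1) + 2^j \<le> R}"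
    then have "q * 2^(j+1) \<le> R" by simp
    moreover have "q \<le> q * 2^(j+1)" by simp
    ultimately have "q \<le> R" by (rule le_trans[rotated])
    then show "q \<in> {..R}" by simp
  qed
qed simp

lemma finite_block_indices: "finite (block_indices n X J)"
  unfolding block_indices_def by (intro finite_SigmaI finite_dyadic_blocks_below) auto

lemma sum_block_indices:
  fixes g :: "nat \<times> nat \<times> nat \<times> nat \<Rightarrow> real"
  shows "(\<Sum>i\<in>block_indices n X J. g i)
    = (\<Sum>d<n. \<Sum>r<gcd n d. \<Sum>j<J. \<Sum>q\<in>{q. q * 2^(j+1) + 2^j \<le> walk_visits n X d r}. g (d, r, j, q))"
  unfolding block_indices_def using finite_dyadic_blocks_below by (simp add: sum.Sigma split_def)

lemma sum_block_indices_cost_le: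
  fixes n J :: nat and X :: "nat set" and L :: real
  assumes n: "n > 0" and X: "X \<subseteq> {..<n}" and m: "card X > 0" and J: "2 * card X < 2^J"
    and L: "L = ln (real n / real (card X))"
  shows "(\<Sum>(d, r, j, q)\<in>block_indices n X J. exp (-(L + 20 + real (J - Suc j)))) \<le> card X / 10"
proof -
  have mn: "card X \<le> n" using card_mono[OF _ X] by simp
  define c where "c j = exp (-(L + 20 + real (J - Suc j)))" for j
  have "(\<Sum>(d, r, j, q)\<in>block_indices n X J. c j)
      = (\<Sum>d<n. \<Sum>r<gcd n d. \<Sum>j<J. real (card {q. q * 2^(j+1) + 2^j \<le> walk_visits n X d r}) * c j)"
    unfolding sum_block_indices by simp
  also have "\<dots> \<le> (\<Sum>d<n. \<Sum>j<J. (2 * real (card X) / 2^j) * c j)"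
    by (intro sum_mono sum_coset_block_costs_le[OF n X]) (simp add: c_def)
  also have "\<dots> \<le> card X / 10"
    using sum_dyadic_costs_le[OF m mn J L] unfolding c_def by simp
  finally show ?thesis unfolding c_def .
qed

definition block_sums_bounded :: "nat \<Rightarrow> nat set \<Rightarrow> nat \<Rightarrow> (nat \<Rightarrow> real) \<Rightarrow> (nat \<Rightarrow> int) \<Rightarrow> bool" where
  "block_sums_bounded n X J B col \<longleftrightarrow>
     (\<forall>(d, r, j, q)\<in>block_indices n X J. \<bar>real_of_int (block_sum n X d r col j q)\<bar> \<le> B j)"

lemma prefix_sum_abs_le:
  fixes col :: "nat \<Rightarrow> int" and B :: "nat \<Rightarrow> real"
  assumes u: "u < 2^J" and B0: "\<And>j. B j \<ge> 0"
    and B: "\<And>j q. j < J \<Longrightarrow> q * 2^(j+1) + 2^j \<le> u \<Longrightarrow> \<bar>real_of_int (block_sum n X d r col j q)\<bar> \<le> B j"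
  shows "\<bar>real_of_int (prefix_sum n X d r col u)\<bar> \<le> (\<Sum>j<J. B j)"
proof -
  have "\<bar>real_of_int (prefix_sum n X d r col u)\<bar>
      \<le> (\<Sum>j<J. \<bar>real_of_int (if odd (u div 2^j) then block_sum n X d r col j (u div 2^(j+1)) else 0)\<bar>)"
    unfolding prefix_sum_blocks[OF u] of_int_sum by (rule sum_abs)
  also have "\<dots> \<le> (\<Sum>j<J. B j)"
  proof (intro sum_mono)
    fix j assume j: "j \<in> {..<J}"
    have "u div 2^(j+1) * 2^(j+1) + 2^j \<le> u" if "odd (u div 2^j)"
    proof -
      have "u div 2^(j+1) = u div 2^j div 2"
        by (simp only: power_Suc2 Suc_eq_plus1[symmetric] div_mult2_eq)
      then have "u div 2^j = 2 * (u div 2^(j+1)) + 1"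
        using odd_two_times_div_two_succ[OF that] by simp
      moreover have "u div 2^j * 2^j \<le> u" by (rule div_times_less_eq_dividend)
      ultimately show ?thesis by (simp add: algebra_simps)
    qed
    then show "\<bar>real_of_int (if odd (u div 2^j) then block_sum n X d r col j (u div 2^(j+1)) else 0)\<bar> \<le> B j"
      using B j B0 by auto
  qed
  finally show ?thesis .
qed

lemma arith_prog_discrepancy_le:
  fixes col :: "nat \<Rightarrow> int" and B :: "nat \<Rightarrow> real"
  assumes n: "n > 0" and X: "X \<subseteq> {..<n}" and J: "2 * card X < 2^J"
    and B0: "\<And>j. B j \<ge> 0" and bounded: "block_sums_bounded n X J B col" and A: "A \<in> APs n"
  shows "\<bar>real_of_int (\<Sum>x\<in>A \<inter> X. col x)\<bar> \<le> 2 * (\<Sum>j<J. B j)"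
proof -
  obtain a d l where A: "A = arith_prog n a d l" and a: "a < n" and d: "d < n" and l: "l * gcd n d \<le> n"
    using A unfolding APs_def by blast
  obtain r K0 K1 where r: "r < gcd n d" and K: "K0 \<le> K1" "K1 \<le> 2 * walk_period n d"
    and sum_eq: "(\<Sum>x\<in>A \<inter> X. col x)
                  = prefix_sum n X d r col (walk_rank n X d r K1) - prefix_sum n X d r col (walk_rank n X d r K0)"
    using arith_prog_sum_eq_prefix_diff[OF n a l, where X = X and col = col] unfolding A by blast
  have visits: "walk_visits n X d r < 2^J"
    using member_le_sum[of r "{..<gcd n d}" "walk_visits n X d"] r sum_walk_visits[OF n X, of d] J by simp
  have prefix: "\<bar>real_of_int (prefix_sum n X d r col (walk_rank n X d r K))\<bar> \<le> (\<Sum>j<J. B j)"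
    if "K \<le> 2 * walk_period n d" for K
  proof (rule prefix_sum_abs_le[OF _ B0])
    have "walk_rank n X d r K \<le> walk_visits n X d r" using that by (rule walk_rank_mono)
    then show "walk_rank n X d r K < 2^J" using visits by linarith
    note \<open>walk_rank n X d r K \<le> walk_visits n X d r\<close>
    show "\<bar>real_of_int (block_sum n X d r col j q)\<bar> \<le> B j"
      if "j < J" "q * 2^(j+1) + 2^j \<le> walk_rank n X d r K" for j q
      using bounded that(1) d r le_trans[OF that(2) \<open>walk_rank n X d r K \<le> walk_visits n X d r\<close>]
      unfolding block_sums_bounded_def block_indices_def by force
  qed
  show ?thesis using prefix[of K0] prefix[of K1] K unfolding sum_eq by simp
qed

lemma block_sums_coloring:
  fixes n J :: nat and X :: "nat set" and L :: real
  assumes n: "n > 0" and X: "X \<subseteq> {..<n}" and m: "card X > 0" and J: "2 * card X < 2^J"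
    and L: "L = ln (real n / real (card X))"
  shows "\<exists>col::nat\<Rightarrow>int. (\<forall>x\<in>X. col x \<in> {-1,0,1}) \<and> real (card {x\<in>X. col x \<noteq> 0}) \<ge> card X / 10
           \<and> block_sums_bounded n X J (block_threshold L J) col"
proof -
  define w :: "nat \<times> nat \<times> nat \<times> nat \<Rightarrow> nat \<Rightarrow> real"
    where "w = (\<lambda>(d, r, j, q). block_weight n X d r j q)"
  define V :: "nat \<times> nat \<times> nat \<times> nat \<Rightarrow> real" where "V = (\<lambda>(d, r, j, q). 2 * 2^j)"
  define D :: "nat \<times> nat \<times> nat \<times> nat \<Rightarrow> real" where "D = (\<lambda>(d, r, j, q). block_threshold L J j)"
  have finX: "finite X" using X finite_subset by blast
  have L0: "L \<ge> 0" unfolding L using m card_mono[OF _ X] by (simp add: field_simps)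
  obtain col :: "nat \<Rightarrow> int" where col: "\<forall>x\<in>X. col x \<in> {-1,0,1}" "real (card {x\<in>X. col x \<noteq> 0}) \<ge> real (card X) / 10"
    and bound: "\<forall>i\<in>block_indices n X J. \<bar>\<Sum>x\<in>X. w i x * col x\<bar> \<le> D i"
  proof (atomize_elim, rule partial_coloring[OF finX m finite_block_indices])
    show "(\<Sum>x\<in>X. (w i x)^2) \<le> V i" if "i \<in> block_indices n X J" for i
      using that sum_block_weight_sq_le[OF n _ finX] unfolding block_indices_def V_def w_def by auto
    show "(D i)^2 \<ge> 80 * V i" for i
      using L0 unfolding V_def D_def by (auto simp: block_threshold_squared split: prod.splits)
    have "(\<Sum>i\<in>block_indices n X J. exp (-((D i)^2 / V i)/4))
        = (\<Sum>(d, r, j, q)\<in>block_indices n X J. exp (-(L + 20 + real (J - Suc j))))"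
      using L0 by (intro sum.cong) (auto simp: D_def V_def block_threshold_squared field_simps)
    also have "\<dots> \<le> real (card X) / 10" by (rule sum_block_indices_cost_le[OF n X m J L])
    finally show "(\<Sum>i\<in>block_indices n X J. exp (-((D i)^2 / V i)/4)) \<le> real (card X) / 10" .
  qed (use L0 in \<open>auto simp: V_def D_def block_threshold_pos split: prod.splits\<close>)
  have "block_sums_bounded n X J (block_threshold L J) col"
    unfolding block_sums_bounded_def
  proof (clarify)
    fix d r j q assume "(d, r, j, q) \<in> block_indices n X J"
    then show "\<bar>real_of_int (block_sum n X d r col j q)\<bar> \<le> block_threshold L J j"
      using bound block_sum_eq_weighted_sum[OF finX] unfolding w_def D_def by fastforce
  qed
  then show ?thesis using col by blast
qed

theorem lemma2p2:
  fixes n :: nat and X :: "nat set"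
  assumes "n > 0" and "X \<subseteq> {0..<n}" and "card X > 0"
  shows "\<exists>(col::nat \<Rightarrow> int).
           (\<forall>x\<in>X. col x \<in> {-1, 0, 1}) \<and>
           real (card {x\<in>X. col x \<in> {-1, 1}}) \<ge> real (card X) / 10 \<and>
           (\<forall>A\<in>APs n. \<bar>real_of_int (\<Sum>x\<in>A \<inter> X. col x)\<bar>
               \<le> 200 * sqrt (real (card X)) * sqrt (ln (exp 1 * real n / real (card X))))"
proof -
  define m where "m = card X"
  define L where "L = ln (real n / real m)"
  have X: "X \<subseteq> {..<n}" using assms(2) by auto
  have m: "m > 0" "m \<le> n" using assms card_mono[OF _ assms(2)] unfolding m_def by auto
  have L0: "L \<ge> 0" unfolding L_def using m by (simp add: field_simps)
  obtain J0 where J0: "2^J0 \<le> 2 * m" "2 * m < 2^Suc J0" using ex_power_ivl1[of 2 "2 * m"] m by auto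
  define J where "J = Suc J0"
  have J: "2 * card X < 2^J" using J0(2) unfolding J_def m_def .
  have "real (2^J) \<le> real (4 * m)" using J0(1) unfolding J_def by (simp only: of_nat_le_iff) simp
  then have J': "(2::real)^J \<le> 4 * real m" by simp
  have B0: "block_threshold L J j \<ge> 0" for j using block_threshold_pos[OF L0] less_imp_le by blast
  obtain col where col: "\<forall>x\<in>X. col x \<in> {-1,0,1}" "real (card {x\<in>X. col x \<noteq> 0}) \<ge> real m / 10"
    and bounded: "block_sums_bounded n X J (block_threshold L J) col"
    using block_sums_coloring[OF assms(1) X assms(3) J] unfolding L_def m_def by blast
  have "2 * (\<Sum>j<J. block_threshold L J j) \<le> 2 * (90 * sqrt (real m) * sqrt (1 + L))"
    using sum_block_threshold_le[OF _ L0 J'] m by simp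
  also have "\<dots> \<le> 200 * sqrt (real m) * sqrt (1 + L)" using L0 by simp
  also have "1 + L = ln (exp 1 * real n / real m)"
    unfolding L_def using m by (simp add: ln_mult ln_div)
  finally have "\<bar>real_of_int (\<Sum>x\<in>A \<inter> X. col x)\<bar> \<le> 200 * sqrt (real m) * sqrt (ln (exp 1 * real n / real m))"
    if "A \<in> APs n" for A
    using arith_prog_discrepancy_le[OF assms(1) X J B0 bounded that] by linarith
  moreover have "{x\<in>X. col x \<in> {-1, 1}} = {x\<in>X. col x \<noteq> 0}" using col(1) by auto
  ultimately show ?thesis using col unfolding m_def by auto
qed

end
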